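(* Let $\Omega\subset\mathbb R^2$ be a convex, open, bounded polygonal domain, $\omega\subset\Omega$ a non-empty open set, $f\in L^2(\Omega)$, $g\in H^{1/2}(\partial\Omega)$, $a_0>0$, $q\in L^2(\omega)$ given, and $a\in C^1(\partial\Omega)$ with $a\ge a_0$. For $\eta$ in a neighborhood $D(Z_a)$ of $0$ in $C^1(\partial\Omega)$ on which it is well defined, let $Z_a(\eta)=z_h^{(a+\eta)}\in V_h$. Then: (i) there exist $\rho>0$ and $C>0$ such that $\|Z_a(\eta_1)-Z_a(\eta_2)\|_{H^1(\Omega)}\le C\|\eta_1-\eta_2\|_{C^1(\partial\Omega)}$ for all $\eta_1\in D(Z_a)$ and all $\eta_2\in D(Z_a)$ with $\|\eta_2\|_{C^1(\partial\Omega)}\le\rho$; (ii) the Fréchet derivative of $Z_a$ at $0$ (as a map into $H^1(\Omega)$) is $Z_a'(0)\eta=\dot z_h^{(a)}$, where $\dot z_h^{(a)}\in V_h$ is the unique solution of $$b_a(\dot z_h^{(a)},v)=\int_\omega\dot u_h^{(a)}v\,dx-\int_{\partial\Omega}\eta\,z_h^{(a)}v\,ds\quad\text{for all }v\in V_h,$$ and $\dot u_h^{(a)}\in V_h$ is the unique solution of $b_a(\dot u_h^{(a)},v)=-\int_{\partial\Omega}\eta\,u_h^{(a)}v\,ds$ for all $v\in V_h$.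
   Context: For a Robin parameter $\alpha\in C^1(\partial\Omega)$ define $b_\alpha(u,v)=\int_\Omega\nabla u\cdot\nabla v\,dx+\int_{\partial\Omega}\alpha uv\,ds$ and $\ell_{f,g}(v)=\int_{\partial\Omega}gv\,ds-\int_\Omega fv\,dx$. $\mathcal T_h$ is a triangulation of $\Omega$ into triangles forming a simplicial complex, $h=\max_{K\in\mathcal T_h}\mathrm{diam}(K)$, and $V_h=\{v\in H^1(\Omega): v|_K\in\mathbb P^1\ \forall K\in\mathcal T_h\}$. $u_h^{(\alpha)}\in V_h$ solves $b_\alpha(u_h^{(\alpha)},v)=\ell_{f,g}(v)$ for all $v\in V_h$, and $z_h^{(\alpha)}\in V_h$ solves $b_\alpha(z_h^{(\alpha)},v)=-\int_\omega(q-u_h^{(\alpha)})v\,dx$ for all $v\in V_h$. *)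

theory Defs
  imports "HOL-Analysis.Analysis"
begin

type_synonym pt = "real^2"

definition convex_polygonal_domain :: "pt set \<Rightarrow> bool" where
  "convex_polygonal_domain \<Omega> \<longleftrightarrow> open \<Omega> \<and> \<Omega> \<noteq> {} \<and> bounded \<Omega> \<and> convex \<Omega> \<and>
     (\<exists>P. finite P \<and> \<Omega> = interior (convex hull P))"

definition triangle :: "pt set \<Rightarrow> bool" where
  "triangle K \<longleftrightarrow> (\<exists>a b c. K = convex hull {a, b, c} \<and> \<not> collinear {a, b, c})"

definition fe_triangulation :: "pt set set \<Rightarrow> pt set \<Rightarrow> bool" where
  "fe_triangulation T \<Omega> \<longleftrightarrow> finite T \<and> (\<forall>K\<in>T. triangle K) \<and> \<Union>T = closure \<Omega> \<and>
     (\<forall>K1\<in>T. \<forall>K2\<in>T. (K1 \<inter> K2) face_of K1 \<and> (K1 \<inter> K2) face_of K2)"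

text \<open>Ordered pairs of endpoints of the edges of the polygon (each edge counted twice).\<close>
definition bedge :: "pt set \<Rightarrow> pt \<Rightarrow> pt \<Rightarrow> bool" where
  "bedge \<Omega> p q \<longleftrightarrow> p \<noteq> q \<and> closed_segment p q face_of closure \<Omega>"

definition seg :: "pt \<Rightarrow> pt \<Rightarrow> real \<Rightarrow> pt" where
  "seg p q t = p + t *\<^sub>R (q - p)"

definition bint :: "pt set \<Rightarrow> (pt \<Rightarrow> real) \<Rightarrow> real" where
  "bint \<Omega> F = (\<Sum>pq\<in>{(p, q). bedge \<Omega> p q}.
       dist (fst pq) (snd pq) * integral {0..1} (\<lambda>t. F (seg (fst pq) (snd pq) t))) / 2"

definition L2_on :: "pt set \<Rightarrow> (pt \<Rightarrow> real) \<Rightarrow> bool" where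
  "L2_on S f \<longleftrightarrow> f measurable_on S \<and> (\<lambda>x. (f x)^2) integrable_on S"

text \<open>H^{1/2}(boundary): L^2 on the boundary plus finite Gagliardo seminorm.\<close>
definition H12_bdry :: "pt set \<Rightarrow> (pt \<Rightarrow> real) \<Rightarrow> bool" where
  "H12_bdry \<Omega> g \<longleftrightarrow>
     (\<forall>p q. bedge \<Omega> p q \<longrightarrow> (\<lambda>t. g (seg p q t)) measurable_on {0..1} \<and>
                               (\<lambda>t. (g (seg p q t))^2) integrable_on {0..1}) \<and>
     (\<forall>p q p' q'. bedge \<Omega> p q \<and> bedge \<Omega> p' q' \<longrightarrow>
        (\<lambda>z::real \<times> real. (g (seg p q (fst z)) - g (seg p' q' (snd z)))^2
              / (norm (seg p q (fst z) - seg p' q' (snd z)))^2) integrable_on ({0..1} \<times> {0..1}))"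

definition edge_deriv :: "(pt \<Rightarrow> real) \<Rightarrow> pt \<Rightarrow> pt \<Rightarrow> real \<Rightarrow> real" where
  "edge_deriv \<eta> p q t = (THE d. ((\<lambda>s. \<eta> (seg p q s)) has_real_derivative d) (at t within {0..1}))"

text \<open>C^1(boundary): C^1 along each edge up to the endpoints, and the tangential
  derivative is continuous across the corners (one-sided directional derivatives along
  the two edges leaving a vertex sum to zero).\<close>
definition C1_bdry :: "pt set \<Rightarrow> (pt \<Rightarrow> real) set" where
  "C1_bdry \<Omega> = {\<eta>.
     (\<forall>p q. bedge \<Omega> p q \<longrightarrow>
        (\<forall>t\<in>{0..1}. ((\<lambda>s. \<eta> (seg p q s)) has_real_derivative edge_deriv \<eta> p q t) (at t within {0..1}))
        \<and> continuous_on {0..1} (edge_deriv \<eta> p q)) \<and>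
     (\<forall>p q r. bedge \<Omega> q p \<and> bedge \<Omega> q r \<and> p \<noteq> r \<longrightarrow>
        edge_deriv \<eta> q p 0 / dist q p + edge_deriv \<eta> q r 0 / dist q r = 0)}"

definition C1_norm :: "pt set \<Rightarrow> (pt \<Rightarrow> real) \<Rightarrow> real" where
  "C1_norm \<Omega> \<eta> = (SUP x\<in>frontier \<Omega>. \<bar>\<eta> x\<bar>) +
     (SUP z\<in>{(p, q, t). bedge \<Omega> p q \<and> t \<in> {0..1}}.
        \<bar>edge_deriv \<eta> (fst z) (fst (snd z)) (snd (snd z))\<bar> / dist (fst z) (fst (snd z)))"

definition grad :: "(pt \<Rightarrow> real) \<Rightarrow> pt \<Rightarrow> pt" where
  "grad u x = (THE g. (u has_derivative (\<lambda>h. g \<bullet> h)) (at x))"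

definition H1_norm :: "pt set \<Rightarrow> (pt \<Rightarrow> real) \<Rightarrow> real" where
  "H1_norm \<Omega> w = sqrt (integral \<Omega> (\<lambda>x. (w x)^2 + (norm (grad w x))^2))"

text \<open>P1 finite element space (continuous representatives, extended by 0 outside the closure).\<close>
definition Vh :: "pt set set \<Rightarrow> pt set \<Rightarrow> (pt \<Rightarrow> real) set" where
  "Vh T \<Omega> = {v. (\<forall>K\<in>T. \<exists>c::pt. \<exists>d::real. \<forall>x\<in>K. v x = c \<bullet> x + d) \<and>
                  (\<forall>x. x \<notin> closure \<Omega> \<longrightarrow> v x = 0)}"

definition bform :: "pt set \<Rightarrow> (pt \<Rightarrow> real) \<Rightarrow> (pt \<Rightarrow> real) \<Rightarrow> (pt \<Rightarrow> real) \<Rightarrow> real" where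
  "bform \<Omega> \<alpha> u v = integral \<Omega> (\<lambda>x. grad u x \<bullet> grad v x) + bint \<Omega> (\<lambda>x. \<alpha> x * u x * v x)"

definition lform :: "pt set \<Rightarrow> (pt \<Rightarrow> real) \<Rightarrow> (pt \<Rightarrow> real) \<Rightarrow> (pt \<Rightarrow> real) \<Rightarrow> real" where
  "lform \<Omega> f g v = bint \<Omega> (\<lambda>x. g x * v x) - integral \<Omega> (\<lambda>x. f x * v x)"

definition u_eq where
  "u_eq T \<Omega> f g \<alpha> u \<longleftrightarrow> u \<in> Vh T \<Omega> \<and> (\<forall>v\<in>Vh T \<Omega>. bform \<Omega> \<alpha> u v = lform \<Omega> f g v)"

definition uh where
  "uh T \<Omega> f g \<alpha> = (THE u. u_eq T \<Omega> f g \<alpha> u)"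

definition z_eq where
  "z_eq T \<Omega> \<omega> f g q \<alpha> z \<longleftrightarrow> z \<in> Vh T \<Omega> \<and>
     (\<forall>v\<in>Vh T \<Omega>. bform \<Omega> \<alpha> z v = - integral \<omega> (\<lambda>x. (q x - uh T \<Omega> f g \<alpha> x) * v x))"

definition zh where
  "zh T \<Omega> \<omega> f g q \<alpha> = (THE z. z_eq T \<Omega> \<omega> f g q \<alpha> z)"

definition disc_well_defined where
  "disc_well_defined T \<Omega> \<omega> f g q \<alpha> \<longleftrightarrow>
     (\<exists>!u. u_eq T \<Omega> f g \<alpha> u) \<and> (\<exists>!z. z_eq T \<Omega> \<omega> f g q \<alpha> z)"

definition Za where
  "Za T \<Omega> \<omega> f g q a \<eta> = zh T \<Omega> \<omega> f g q (\<lambda>x. a x + \<eta> x)"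

definition udot_eq where
  "udot_eq T \<Omega> f g a \<eta> w \<longleftrightarrow> w \<in> Vh T \<Omega> \<and>
     (\<forall>v\<in>Vh T \<Omega>. bform \<Omega> a w v = - bint \<Omega> (\<lambda>x. \<eta> x * uh T \<Omega> f g a x * v x))"

definition udot where
  "udot T \<Omega> f g a \<eta> = (THE w. udot_eq T \<Omega> f g a \<eta> w)"

definition zdot_eq where
  "zdot_eq T \<Omega> \<omega> f g q a \<eta> w \<longleftrightarrow> w \<in> Vh T \<Omega> \<and>
     (\<forall>v\<in>Vh T \<Omega>. bform \<Omega> a w v =
        integral \<omega> (\<lambda>x. udot T \<Omega> f g a \<eta> x * v x)
        - bint \<Omega> (\<lambda>x. \<eta> x * zh T \<Omega> \<omega> f g q a x * v x))"

definition zdot where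
  "zdot T \<Omega> \<omega> f g q a \<eta> = (THE w. zdot_eq T \<Omega> \<omega> f g q a \<eta> w)"

end

(* Everything happens in the finite-dimensional space V_h. For a Robin coefficient bounded
   below by a positive constant the form b_alpha is symmetric and positive definite on V_h,
   so Galerkin problems are uniquely solvable, and an orthonormal basis for the reference
   energy b_a bounds every bilinear and linear form of the problem by a constant times energy
   norms. Perturbing alpha by eta adds the boundary form int eta u v, whose size is controlled
   by sup |eta|; hence for small eta the perturbed forms stay uniformly coercive. Subtracting
   Galerkin equations gives Lipschitz bounds for u_h and z_h, and the remainders
   u_h^(a+eta) - u_h^(a) - udot, z_h^(a+eta) - z_h^(a) - zdot solve the reference problem with
   right-hand sides that are products of two first-order differences, which gives the
   quadratic Frechet estimate. On V_h the H^1 norm is dominated by the energy norm, and the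
   C^1 norm dominates the sup norm on the boundary. *)

theory Submission
  imports Defs
begin

section \<open>Galerkin problems on finite-dimensional function spaces\<close>

definition fn_subspace :: "('x \<Rightarrow> real) set \<Rightarrow> bool" where
  "fn_subspace V \<longleftrightarrow> (\<lambda>x. 0) \<in> V \<and> (\<forall>u\<in>V. \<forall>v\<in>V. (\<lambda>x. u x + v x) \<in> V)
     \<and> (\<forall>u\<in>V. \<forall>c. (\<lambda>x. c * u x) \<in> V)"

definition linear_on :: "('x \<Rightarrow> real) set \<Rightarrow> (('x \<Rightarrow> real) \<Rightarrow> real) \<Rightarrow> bool" where
  "linear_on V \<phi> \<longleftrightarrow> (\<forall>u\<in>V. \<forall>v\<in>V. \<phi> (\<lambda>x. u x + v x) = \<phi> u + \<phi> v)
     \<and> (\<forall>u\<in>V. \<forall>c. \<phi> (\<lambda>x. c * u x) = c * \<phi> u)"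

definition bilinear_on :: "('x \<Rightarrow> real) set \<Rightarrow> (('x \<Rightarrow> real) \<Rightarrow> ('x \<Rightarrow> real) \<Rightarrow> real) \<Rightarrow> bool" where
  "bilinear_on V b \<longleftrightarrow> (\<forall>u\<in>V. linear_on V (b u)) \<and> (\<forall>v\<in>V. linear_on V (\<lambda>u. b u v))"

definition symmetric_on :: "('x \<Rightarrow> real) set \<Rightarrow> (('x \<Rightarrow> real) \<Rightarrow> ('x \<Rightarrow> real) \<Rightarrow> real) \<Rightarrow> bool" where
  "symmetric_on V b \<longleftrightarrow> (\<forall>u\<in>V. \<forall>v\<in>V. b u v = b v u)"

definition pos_def_on :: "('x \<Rightarrow> real) set \<Rightarrow> (('x \<Rightarrow> real) \<Rightarrow> ('x \<Rightarrow> real) \<Rightarrow> real) \<Rightarrow> bool" where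
  "pos_def_on V b \<longleftrightarrow> (\<forall>v\<in>V. v \<noteq> (\<lambda>x. 0) \<longrightarrow> b v v > 0)"

definition lincomb :: "(('x \<Rightarrow> real) \<Rightarrow> real) \<Rightarrow> ('x \<Rightarrow> real) set \<Rightarrow> 'x \<Rightarrow> real" where
  "lincomb c E = (\<lambda>x. \<Sum>e\<in>E. c e * e x)"

definition orthonormal_basis ::
    "('x \<Rightarrow> real) set \<Rightarrow> (('x \<Rightarrow> real) \<Rightarrow> ('x \<Rightarrow> real) \<Rightarrow> real) \<Rightarrow> ('x \<Rightarrow> real) set \<Rightarrow> bool" where
  "orthonormal_basis V b E \<longleftrightarrow> finite E \<and> E \<subseteq> V
     \<and> (\<forall>e\<in>E. \<forall>e'\<in>E. b e e' = (if e = e' then 1 else 0)) \<and> (\<forall>v\<in>V. v = lincomb (b v) E)"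

lemma fn_subspaceD:
  assumes "fn_subspace V"
  shows fn_subspace_zero: "(\<lambda>x. 0) \<in> V"
    and fn_subspace_add: "u \<in> V \<Longrightarrow> v \<in> V \<Longrightarrow> (\<lambda>x. u x + v x) \<in> V"
    and fn_subspace_scale: "u \<in> V \<Longrightarrow> (\<lambda>x. c * u x) \<in> V"
  using assms unfolding fn_subspace_def by auto

lemma fn_subspace_diff: "fn_subspace V \<Longrightarrow> u \<in> V \<Longrightarrow> v \<in> V \<Longrightarrow> (\<lambda>x. u x - v x) \<in> V"
  using fn_subspace_add[of V u "\<lambda>x. (-1) * v x"] fn_subspace_scale[of V v "-1"] by simp

lemma linear_onD:
  assumes "linear_on V \<phi>"
  shows linear_on_add: "u \<in> V \<Longrightarrow> v \<in> V \<Longrightarrow> \<phi> (\<lambda>x. u x + v x) = \<phi> u + \<phi> v"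
    and linear_on_scale: "u \<in> V \<Longrightarrow> \<phi> (\<lambda>x. c * u x) = c * \<phi> u"
  using assms unfolding linear_on_def by auto

lemma linear_on_zero: "linear_on V \<phi> \<Longrightarrow> fn_subspace V \<Longrightarrow> \<phi> (\<lambda>x. 0) = 0"
  using linear_on_scale[of V \<phi> "\<lambda>x. 0" 0] fn_subspace_zero[of V] by simp

lemma linear_on_diff:
  "linear_on V \<phi> \<Longrightarrow> fn_subspace V \<Longrightarrow> u \<in> V \<Longrightarrow> v \<in> V \<Longrightarrow> \<phi> (\<lambda>x. u x - v x) = \<phi> u - \<phi> v"
  using linear_on_add[of V \<phi> u "\<lambda>x. (-1) * v x"] linear_on_scale[of V \<phi> v "-1"]
    fn_subspace_scale[of V v "-1"] by simp

lemma linear_on_diff3: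
  assumes "linear_on V \<phi>" "fn_subspace V" "A \<in> V" "B \<in> V" "C \<in> V"
  shows "\<phi> (\<lambda>x. A x - B x - C x) = \<phi> A - \<phi> B - \<phi> C"
  using linear_on_diff[OF assms(1,2) fn_subspace_diff[OF assms(2,3,4)] assms(5)]
    linear_on_diff[OF assms(1,2,3,4)] by simp

lemma linear_on_subset: "linear_on V \<phi> \<Longrightarrow> W \<subseteq> V \<Longrightarrow> linear_on W \<phi>"
  unfolding linear_on_def by blast

lemma linear_on_cong:
  assumes "linear_on V \<phi>" "\<And>v. v \<in> V \<Longrightarrow> \<psi> v = \<phi> v" "fn_subspace V"
  shows "linear_on V \<psi>"
  using assms fn_subspace_add[OF assms(3)] fn_subspace_scale[OF assms(3)] by (simp add: linear_on_def)

lemma linear_on_minus: "linear_on V \<phi> \<Longrightarrow> linear_on V (\<lambda>v. - \<phi> v)"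
  unfolding linear_on_def by simp

lemma linear_on_diff_fun: "linear_on V \<phi> \<Longrightarrow> linear_on V \<psi> \<Longrightarrow> linear_on V (\<lambda>v. \<phi> v - \<psi> v)"
  unfolding linear_on_def by (simp add: right_diff_distrib)

lemma bilinear_onD:
  assumes "bilinear_on V b"
  shows bilinear_on_left: "v \<in> V \<Longrightarrow> linear_on V (\<lambda>u. b u v)"
    and bilinear_on_right: "u \<in> V \<Longrightarrow> linear_on V (b u)"
  using assms unfolding bilinear_on_def by auto

lemma bilinear_on_subset: "bilinear_on V b \<Longrightarrow> W \<subseteq> V \<Longrightarrow> bilinear_on W b"
  unfolding bilinear_on_def linear_on_def by blast

lemma bilinear_on_add: "bilinear_on V b \<Longrightarrow> bilinear_on V c \<Longrightarrow> bilinear_on V (\<lambda>u v. b u v + c u v)"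
  unfolding bilinear_on_def linear_on_def by (simp add: distrib_left)

lemma bilinear_on_symmetric:
  "fn_subspace V \<Longrightarrow> symmetric_on V b \<Longrightarrow> (\<And>u. u \<in> V \<Longrightarrow> linear_on V (b u)) \<Longrightarrow> bilinear_on V b"
  unfolding bilinear_on_def linear_on_def symmetric_on_def fn_subspace_def by simp

lemma symmetric_on_add: "symmetric_on V b \<Longrightarrow> symmetric_on V c \<Longrightarrow> symmetric_on V (\<lambda>u v. b u v + c u v)"
  unfolding symmetric_on_def by simp

lemma lincomb_insert: "finite E \<Longrightarrow> e \<notin> E \<Longrightarrow> lincomb c (insert e E) = (\<lambda>x. c e * e x + lincomb c E x)"
  by (simp add: lincomb_def)

lemma lincomb_cong: "(\<And>e. e \<in> E \<Longrightarrow> c e = d e) \<Longrightarrow> lincomb c E = lincomb d E"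
  by (simp add: lincomb_def)

lemma lincomb_mem:
  assumes "fn_subspace V" "finite E" "E \<subseteq> V"
  shows "lincomb c E \<in> V"
  using assms(2,3)
proof (induction E rule: finite_induct)
  case empty
  then show ?case using fn_subspace_zero[OF assms(1)] by (simp add: lincomb_def)
next
  case (insert e E)
  then show ?case by (simp add: lincomb_insert fn_subspaceD[OF assms(1)])
qed

lemma linear_on_lincomb:
  assumes "linear_on V \<phi>" "fn_subspace V" "finite E" "E \<subseteq> V"
  shows "\<phi> (lincomb c E) = (\<Sum>e\<in>E. c e * \<phi> e)"
  using assms(3,4)
proof (induction E rule: finite_induct)
  case empty
  then show ?case using linear_on_zero[OF assms(1,2)] by (simp add: lincomb_def)
next
  case (insert e E)
  then show ?case
    using lincomb_mem[OF assms(2) insert(1)] fn_subspace_scale[OF assms(2)]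
    by (simp add: lincomb_insert linear_onD[OF assms(1)])
qed

lemma orthonormal_basisD:
  assumes "orthonormal_basis V b E"
  shows "finite E" "E \<subseteq> V" "e \<in> E \<Longrightarrow> e' \<in> E \<Longrightarrow> b e e' = (if e = e' then 1 else 0)"
    "v \<in> V \<Longrightarrow> v = lincomb (b v) E"
  using assms unfolding orthonormal_basis_def by blast+

lemma orthogonal_residual:
  assumes V: "fn_subspace V" and b: "bilinear_on V b" "symmetric_on V b" and \<phi>: "linear_on V \<phi>"
    and E: "finite E" "E \<subseteq> {v\<in>V. \<phi> v = 0}"
    and orth: "\<forall>e\<in>E. \<forall>e'\<in>E. b e e' = (if e = e' then 1 else 0)" and w: "w \<in> V"
  defines "r \<equiv> \<lambda>x. w x - lincomb (b w) E x"
  shows "r \<in> V" "\<phi> r = \<phi> w" "\<And>e. e \<in> E \<Longrightarrow> b e r = 0"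
proof -
  have EV: "E \<subseteq> V" using E(2) by auto
  note lc = lincomb_mem[OF V E(1) EV]
  show "r \<in> V" unfolding r_def by (rule fn_subspace_diff[OF V w lc])
  have "\<phi> r = \<phi> w - (\<Sum>e\<in>E. b w e * \<phi> e)"
    unfolding r_def using linear_on_diff[OF \<phi> V w lc] linear_on_lincomb[OF \<phi> V E(1) EV] by simp
  also have "\<dots> = \<phi> w" using E(2) by (auto intro!: sum.neutral)
  finally show "\<phi> r = \<phi> w" .
  fix e assume e: "e \<in> E"
  then have eV: "e \<in> V" using EV by auto
  have "b e r = b e w - (\<Sum>e'\<in>E. b w e' * b e e')"
    unfolding r_def using linear_on_diff[OF bilinear_on_right[OF b(1) eV] V w lc]
      linear_on_lincomb[OF bilinear_on_right[OF b(1) eV] V E(1) EV] by simp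
  also have "(\<Sum>e'\<in>E. b w e' * b e e') = (\<Sum>e'\<in>E. if e = e' then b w e' else 0)"
    using orth e by (intro sum.cong) auto
  also have "\<dots> = b w e" using e E(1) by simp
  finally show "b e r = 0" using b(2) eV w by (simp add: symmetric_on_def)
qed

text \<open>One Gram--Schmidt step: normalise the residual of a vector outside the kernel of \<open>\<phi>\<close>.\<close>

lemma orthogonal_unit_vector:
  assumes V: "fn_subspace V" and b: "bilinear_on V b" "symmetric_on V b" "pos_def_on V b"
    and \<phi>: "linear_on V \<phi>" and E: "finite E" "E \<subseteq> {v\<in>V. \<phi> v = 0}"
    and orth: "\<forall>e\<in>E. \<forall>e'\<in>E. b e e' = (if e = e' then 1 else 0)"
    and w: "w \<in> V" "\<phi> w \<noteq> 0"
  obtains u where "u \<in> V" "b u u = 1" "\<And>e. e \<in> E \<Longrightarrow> b e u = 0" "\<phi> u \<noteq> 0"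
proof -
  define r where "r = (\<lambda>x. w x - lincomb (b w) E x)"
  note res = orthogonal_residual[OF V b(1,2) \<phi> E orth w(1), folded r_def]
  have "r \<noteq> (\<lambda>x. 0)" using res(2) w(2) linear_on_zero[OF \<phi> V] by auto
  then have rr: "b r r > 0" using b(3) res(1) by (simp add: pos_def_on_def)
  define u where "u = (\<lambda>x. (1 / sqrt (b r r)) * r x)"
  show thesis
  proof
    show "u \<in> V" unfolding u_def by (rule fn_subspace_scale[OF V res(1)])
    have "b u u = (1 / sqrt (b r r)) * ((1 / sqrt (b r r)) * b r r)"
      unfolding u_def
      by (simp only: linear_on_scale[OF bilinear_on_left[OF b(1) fn_subspace_scale[OF V res(1)]] res(1)]
        linear_on_scale[OF bilinear_on_right[OF b(1) res(1)] res(1)])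
    then show "b u u = 1" using rr by (simp add: field_simps)
    show "b e u = 0" if "e \<in> E" for e
    proof -
      have "e \<in> V" using E(2) that by auto
      then show ?thesis unfolding u_def
        by (simp only: linear_on_scale[OF bilinear_on_right[OF b(1)] res(1)] res(3)[OF that] mult_zero_right)
    qed
    have "\<phi> u = (1 / sqrt (b r r)) * \<phi> w"
      unfolding u_def by (simp only: linear_on_scale[OF \<phi> res(1)] res(2))
    then show "\<phi> u \<noteq> 0" using w(2) rr by simp
  qed
qed

lemma orthonormal_basis_insert:
  assumes V: "fn_subspace V" and b: "bilinear_on V b" "symmetric_on V b" "pos_def_on V b"
    and \<phi>: "linear_on V \<phi>" and E: "orthonormal_basis {v\<in>V. \<phi> v = 0} b E"
    and w: "w \<in> V" "\<phi> w \<noteq> 0"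
  shows "\<exists>E'. orthonormal_basis V b E'"
proof -
  note E' = orthonormal_basisD[OF E]
  have EV: "E \<subseteq> V" using E'(2) by auto
  obtain u where u: "u \<in> V" "b u u = 1" "\<And>e. e \<in> E \<Longrightarrow> b e u = 0" "\<phi> u \<noteq> 0"
    using orthogonal_unit_vector[OF V b \<phi> E'(1,2) _ w] E'(3) by blast
  have bu: "b u e = 0" if "e \<in> E" for e
    using u(3)[OF that] b(2) u(1) EV that by (auto simp: symmetric_on_def)
  have uE: "u \<notin> E" using u(2) u(3) by force
  have "orthonormal_basis V b (insert u E)"
    unfolding orthonormal_basis_def
  proof (intro conjI ballI)
    show "finite (insert u E)" "insert u E \<subseteq> V" using E'(1) EV u(1) by auto
    show "b e e' = (if e = e' then 1 else 0)" if "e \<in> insert u E" "e' \<in> insert u E" for e e'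
      using that E'(3) u(2,3) bu uE by auto
  next
    fix v assume v: "v \<in> V"
    define t where "t = \<phi> v / \<phi> u"
    define v' where "v' = (\<lambda>x. v x - t * u x)"
    have v'V: "v' \<in> V" unfolding v'_def by (rule fn_subspace_diff[OF V v fn_subspace_scale[OF V u(1)]])
    have "\<phi> v' = \<phi> v - t * \<phi> u"
      unfolding v'_def using linear_on_diff[OF \<phi> V v fn_subspace_scale[OF V u(1)]]
        linear_on_scale[OF \<phi> u(1)] by simp
    then have "\<phi> v' = 0" using u(4) by (simp add: t_def)
    then have v'_eq: "v' = lincomb (b v') E" using E'(4) v'V by blast
    have bv': "b v' e = b v e - t * b u e" if "e \<in> V" for e
      unfolding v'_def using linear_on_diff[OF bilinear_on_left[OF b(1) that] V v fn_subspace_scale[OF V u(1)]]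
        linear_on_scale[OF bilinear_on_left[OF b(1) that] u(1)] by simp
    have "lincomb (b v') E = lincomb (b v) E"
      using bv' bu EV by (intro lincomb_cong) auto
    moreover have "b v' u = 0"
      using linear_on_lincomb[OF bilinear_on_left[OF b(1) u(1)] V E'(1) EV, of "b v'"] u(3)
      by (simp flip: v'_eq)
    then have "b v u = t" using bv'[OF u(1)] u(2) by simp
    ultimately have "lincomb (b v) (insert u E) = (\<lambda>x. t * u x + v' x)"
      using v'_eq by (simp add: lincomb_insert[OF E'(1) uE])
    then show "v = lincomb (b v) (insert u E)" by (simp add: v'_def)
  qed
  then show ?thesis ..
qed

text \<open>The functionals in \<open>\<Phi>\<close> play the role of the degrees of freedom; by induction each
  one cuts the space down to a kernel, so finitely many of them exhaust it.\<close>

lemma orthonormal_basis_exists: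
  assumes "finite \<Phi>" "fn_subspace V" "\<forall>\<phi>\<in>\<Phi>. linear_on V \<phi>"
    and "\<forall>v\<in>V. (\<forall>\<phi>\<in>\<Phi>. \<phi> v = 0) \<longrightarrow> v = (\<lambda>x. 0)"
    and "bilinear_on V b" "symmetric_on V b" "pos_def_on V b"
  shows "\<exists>E. orthonormal_basis V b E"
  using assms
proof (induction \<Phi> arbitrary: V rule: finite_induct)
  case empty
  then have "V = {\<lambda>x. 0}" using fn_subspace_zero by auto
  then have "orthonormal_basis V b {}" by (simp add: orthonormal_basis_def lincomb_def)
  then show ?case ..
next
  case (insert \<phi> \<Phi>)
  have \<phi>: "linear_on V \<phi>" using insert.prems(2) by simp
  show ?case
  proof (cases "\<forall>v\<in>V. \<phi> v = 0")
    case True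
    then show ?thesis using insert.IH[of V] insert.prems by auto
  next
    case False
    then obtain w where w: "w \<in> V" "\<phi> w \<noteq> 0" by auto
    define V' where "V' = {v\<in>V. \<phi> v = 0}"
    have "V' \<subseteq> V" by (auto simp: V'_def)
    have "fn_subspace V'"
      using fn_subspaceD[OF insert.prems(1)] linear_on_zero[OF \<phi> insert.prems(1)] linear_onD[OF \<phi>]
      unfolding V'_def fn_subspace_def by auto
    moreover have "\<forall>\<psi>\<in>\<Phi>. linear_on V' \<psi>"
      using insert.prems(2) linear_on_subset \<open>V' \<subseteq> V\<close> by blast
    moreover have "\<forall>v\<in>V'. (\<forall>\<psi>\<in>\<Phi>. \<psi> v = 0) \<longrightarrow> v = (\<lambda>x. 0)"
      using insert.prems(3) by (auto simp: V'_def)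
    moreover have "bilinear_on V' b" "symmetric_on V' b" "pos_def_on V' b"
      using insert.prems(4-6) bilinear_on_subset \<open>V' \<subseteq> V\<close>
      unfolding symmetric_on_def pos_def_on_def by blast+
    ultimately have "\<exists>E. orthonormal_basis V' b E" by (rule insert.IH)
    then show ?thesis
      using orthonormal_basis_insert[OF insert.prems(1) insert.prems(4-6) \<phi> _ w]
      unfolding V'_def by blast
  qed
qed

lemma riesz_representation:
  assumes E: "orthonormal_basis V b E" and V: "fn_subspace V"
    and b: "bilinear_on V b" "symmetric_on V b" and L: "linear_on V L"
  shows "lincomb L E \<in> V" "v \<in> V \<Longrightarrow> b (lincomb L E) v = L v"
proof -
  note E' = orthonormal_basisD[OF E]
  show "lincomb L E \<in> V" by (rule lincomb_mem[OF V E'(1,2)])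
  assume v: "v \<in> V"
  have "b (lincomb L E) v = (\<Sum>e\<in>E. L e * b e v)"
    by (rule linear_on_lincomb[OF bilinear_on_left[OF b(1) v] V E'(1,2)])
  also have "\<dots> = (\<Sum>e\<in>E. b v e * L e)"
    using b(2) v E'(2) by (intro sum.cong) (auto simp: symmetric_on_def)
  also have "\<dots> = L (lincomb (b v) E)"
    by (simp add: linear_on_lincomb[OF L V E'(1,2)])
  also have "lincomb (b v) E = v" using E'(4)[OF v] by simp
  finally show "b (lincomb L E) v = L v" .
qed

lemma pos_def_on_unique:
  assumes V: "fn_subspace V" and b: "bilinear_on V b" "pos_def_on V b" and u: "u \<in> V" "u' \<in> V"
    and eq: "\<forall>v\<in>V. b u v = b u' v"
  shows "u = u'"
proof -
  have dV: "(\<lambda>x. u x - u' x) \<in> V" by (rule fn_subspace_diff[OF V u])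
  have "b (\<lambda>x. u x - u' x) (\<lambda>x. u x - u' x) = 0"
    using linear_on_diff[OF bilinear_on_left[OF b(1) dV] V u] eq dV by simp
  then have "(\<lambda>x. u x - u' x) = (\<lambda>x. 0)" using b(2) dV unfolding pos_def_on_def by force
  then show ?thesis by (simp add: fun_eq_iff)
qed

lemma galerkin_unique_solution:
  assumes "finite \<Phi>" "fn_subspace V" "\<forall>\<phi>\<in>\<Phi>. linear_on V \<phi>"
    and "\<forall>v\<in>V. (\<forall>\<phi>\<in>\<Phi>. \<phi> v = 0) \<longrightarrow> v = (\<lambda>x. 0)"
    and b: "bilinear_on V b" "symmetric_on V b" "pos_def_on V b" and L: "linear_on V L"
  shows "\<exists>!u. u \<in> V \<and> (\<forall>v\<in>V. b u v = L v)"
proof -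
  obtain E where E: "orthonormal_basis V b E"
    using orthonormal_basis_exists[OF assms(1-4) b] by blast
  note sol = riesz_representation[OF E assms(2) b(1,2) L]
  show ?thesis
  proof (rule ex1I)
    show "lincomb L E \<in> V \<and> (\<forall>v\<in>V. b (lincomb L E) v = L v)" using sol by blast
    show "u = lincomb L E" if "u \<in> V \<and> (\<forall>v\<in>V. b u v = L v)" for u
      using pos_def_on_unique[OF assms(2) b(1,3)] that sol by auto
  qed
qed

lemma orthonormal_basis_sum_squares:
  assumes E: "orthonormal_basis V b E" and V: "fn_subspace V" and b: "bilinear_on V b"
    and v: "v \<in> V"
  shows "b v v = (\<Sum>e\<in>E. (b v e)\<^sup>2)"
proof -
  note E' = orthonormal_basisD[OF E]
  have "b v v = b v (lincomb (b v) E)" using E'(4)[OF v] by simp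
  also have "\<dots> = (\<Sum>e\<in>E. b v e * b v e)"
    by (rule linear_on_lincomb[OF bilinear_on_right[OF b v] V E'(1,2)])
  finally show ?thesis by (simp add: power2_eq_square)
qed

lemma orthonormal_basis_nonneg:
  "orthonormal_basis V b E \<Longrightarrow> fn_subspace V \<Longrightarrow> bilinear_on V b \<Longrightarrow> v \<in> V \<Longrightarrow> b v v \<ge> 0"
  by (simp add: orthonormal_basis_sum_squares sum_nonneg)

lemma orthonormal_basis_coeff_le:
  assumes E: "orthonormal_basis V b E" and V: "fn_subspace V" and b: "bilinear_on V b"
    and v: "v \<in> V" and e: "e \<in> E"
  shows "\<bar>b v e\<bar> \<le> sqrt (b v v)"
proof -
  have "(b v e)\<^sup>2 \<le> (\<Sum>e\<in>E. (b v e)\<^sup>2)"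
    using orthonormal_basisD(1)[OF E] e by (intro member_le_sum) auto
  then have "(b v e)\<^sup>2 \<le> b v v" using orthonormal_basis_sum_squares[OF E V b v] by simp
  then show ?thesis by (metis real_le_rsqrt power2_abs)
qed

text \<open>On a finite-dimensional space every linear and every bilinear form is bounded with
  respect to the norm of a given inner product; the basis gives explicit constants.\<close>

lemma linear_on_bounded:
  assumes E: "orthonormal_basis V b E" and V: "fn_subspace V" and b: "bilinear_on V b"
    and L: "linear_on V L" and v: "v \<in> V"
  shows "\<bar>L v\<bar> \<le> (\<Sum>e\<in>E. \<bar>L e\<bar>) * sqrt (b v v)"
proof -
  note E' = orthonormal_basisD[OF E]
  have "L v = L (lincomb (b v) E)" using E'(4)[OF v] by simp
  also have "\<dots> = (\<Sum>e\<in>E. b v e * L e)" by (rule linear_on_lincomb[OF L V E'(1,2)])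
  finally have "\<bar>L v\<bar> \<le> (\<Sum>e\<in>E. \<bar>b v e\<bar> * \<bar>L e\<bar>)"
    by (simp add: sum_abs[THEN order_trans] abs_mult)
  also have "\<dots> \<le> (\<Sum>e\<in>E. sqrt (b v v) * \<bar>L e\<bar>)"
    using orthonormal_basis_coeff_le[OF E V b v] by (intro sum_mono mult_right_mono) auto
  finally show ?thesis by (simp add: sum_distrib_left mult.commute)
qed

lemma bilinear_on_bounded:
  assumes E: "orthonormal_basis V b E" and V: "fn_subspace V" and b: "bilinear_on V b"
    and p: "bilinear_on V p" and u: "u \<in> V" and v: "v \<in> V"
  shows "\<bar>p u v\<bar> \<le> (\<Sum>e\<in>E. \<Sum>e'\<in>E. \<bar>p e e'\<bar>) * sqrt (b u u) * sqrt (b v v)"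
proof -
  note E' = orthonormal_basisD[OF E]
  have "\<bar>p u v\<bar> \<le> (\<Sum>e\<in>E. \<bar>p e v\<bar>) * sqrt (b u u)"
    by (rule linear_on_bounded[OF E V b bilinear_on_left[OF p v] u])
  also have "\<dots> \<le> (\<Sum>e\<in>E. (\<Sum>e'\<in>E. \<bar>p e e'\<bar>) * sqrt (b v v)) * sqrt (b u u)"
    using linear_on_bounded[OF E V b bilinear_on_right[OF p] v] E'(2)
      orthonormal_basis_nonneg[OF E V b u]
    by (intro mult_right_mono sum_mono) auto
  finally show ?thesis by (simp add: sum_distrib_left mult_ac)
qed

section \<open>Convex polygons and boundary integrals\<close>

lemma seg_in_closed_segment: "t \<in> {0..1} \<Longrightarrow> seg p q t \<in> closed_segment p q"
  unfolding seg_def in_segment by (rule exI[of _ t]) (auto simp: algebra_simps)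

lemma closed_segment_eq_seg: "x \<in> closed_segment p q \<Longrightarrow> \<exists>t\<in>{0..1}. x = seg p q t"
  unfolding seg_def in_segment by (auto simp: algebra_simps)

lemma finite_family_uniform_bound:
  assumes "finite I" "\<forall>i\<in>I. \<exists>b. \<forall>x\<in>S i. \<bar>f i x\<bar> \<le> (b::real)"
  shows "\<exists>B. \<forall>i\<in>I. \<forall>x\<in>S i. \<bar>f i x\<bar> \<le> B"
  using assms
proof (induction I rule: finite_induct)
  case empty
  then show ?case by auto
next
  case (insert i I)
  then obtain B b where "\<forall>i\<in>I. \<forall>x\<in>S i. \<bar>f i x\<bar> \<le> B" "\<forall>x\<in>S i. \<bar>f i x\<bar> \<le> b" by auto
  then have "\<forall>j\<in>insert i I. \<forall>x\<in>S j. \<bar>f j x\<bar> \<le> max B b" by force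
  then show ?case ..
qed

lemma continuous_on_Icc_bound:
  "continuous_on {0..1::real} h \<Longrightarrow> \<exists>b. \<forall>t\<in>{0..1}. \<bar>h t :: real\<bar> \<le> b"
  by (metis compact_Icc continuous_on_compact_bound real_norm_def)

lemma edge_deriv_eqI:
  assumes "t \<in> {0..1}" "((\<lambda>s. \<eta> (seg p q s)) has_real_derivative d) (at t within {0..1})"
  shows "edge_deriv \<eta> p q t = d"
  unfolding edge_deriv_def
proof (rule the_equality)
  fix d' assume "((\<lambda>s. \<eta> (seg p q s)) has_real_derivative d') (at t within {0..1})"
  then show "d' = d"
    using assms vector_derivative_unique_within_closed_interval[of 0 1 t "\<lambda>s. \<eta> (seg p q s)" d' d]
    by (simp add: has_real_derivative_iff_has_vector_derivative)
qed (fact assms(2))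

text \<open>Domination by \<open>\<bar>f h\<bar> \<le> B (1 + f\<^sup>2) / 2\<close>.\<close>

lemma L2_times_bounded_integrable:
  fixes f h :: "'a::euclidean_space \<Rightarrow> real"
  assumes S: "S \<in> lmeasurable" and f: "f measurable_on S" "(\<lambda>x. (f x)\<^sup>2) integrable_on S"
    and h: "h \<in> borel_measurable (lebesgue_on S)" "\<forall>x\<in>S. \<bar>h x\<bar> \<le> B"
  shows "(\<lambda>x. f x * h x) integrable_on S"
proof -
  have Sl: "S \<in> sets lebesgue" using S by (simp add: fmeasurableD)
  have fb: "f \<in> borel_measurable (lebesgue_on S)"
    using f(1) measurable_on_iff_borel_measurable[OF Sl] by blast
  define B' where "B' = max B 0"
  have G: "(\<lambda>x. B' / 2 + B' / 2 * (f x)\<^sup>2) integrable_on S"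
    using integrable_on_const[OF S] integrable_on_cmult_left[OF f(2)] by (intro integrable_add) auto
  show ?thesis
  proof (rule measurable_bounded_by_integrable_imp_integrable_real[OF borel_measurable_times[OF fb h(1)] G _ Sl])
    fix x assume x: "x \<in> S"
    have "\<bar>f x\<bar> \<le> 1 / 2 + (f x)\<^sup>2 / 2"
      using sum_squares_ge_zero[of "\<bar>f x\<bar> - 1" 0] by (simp add: power2_eq_square algebra_simps)
    moreover have "\<bar>h x\<bar> \<le> B'" "B' \<ge> 0" using h(2) x by (auto simp: B'_def)
    ultimately have "\<bar>f x\<bar> * \<bar>h x\<bar> \<le> (1 / 2 + (f x)\<^sup>2 / 2) * B'" by (intro mult_mono) auto
    then show "\<bar>f x * h x\<bar> \<le> B' / 2 + B' / 2 * (f x)\<^sup>2" by (simp add: abs_mult algebra_simps)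
  qed
qed

locale convex_polygon =
  fixes \<Omega> :: "(real^2) set"
  assumes convex_polygonal: "convex_polygonal_domain \<Omega>"
begin

lemma open_domain: "open \<Omega>" and domain_nonempty: "\<Omega> \<noteq> {}" and bounded_domain: "bounded \<Omega>"
  and convex_domain: "convex \<Omega>"
  using convex_polygonal unfolding convex_polygonal_domain_def by auto

lemma closure_eq_convex_hull: "\<exists>P. finite P \<and> closure \<Omega> = convex hull P"
proof -
  obtain P where P: "finite P" "\<Omega> = interior (convex hull P)"
    using convex_polygonal unfolding convex_polygonal_domain_def by auto
  have "closure \<Omega> = closure (convex hull P)"
    using P domain_nonempty by (simp add: convex_closure_interior convex_convex_hull)
  also have "\<dots> = convex hull P"
    using P(1) by (simp add: closure_convex_hull finite_imp_compact)
  finally show ?thesis using P(1) by blast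
qed

lemma polytope_closure: "polytope (closure \<Omega>)"
  using closure_eq_convex_hull by (auto simp: polytope_def)

lemma interior_closure_eq: "interior (closure \<Omega>) = \<Omega>"
  using open_domain convex_domain by (simp add: convex_interior_closure interior_open)

lemma frontier_eq_rel_frontier: "frontier \<Omega> = rel_frontier (closure \<Omega>)"
proof -
  have "rel_frontier (closure \<Omega>) = frontier (closure \<Omega>)"
    using interior_closure_eq domain_nonempty by (simp add: rel_frontier_nonempty_interior)
  also have "\<dots> = frontier \<Omega>"
    using interior_closure_eq open_domain by (simp add: frontier_def interior_open)
  finally show ?thesis by simp
qed

lemma frontier_subset_closure: "frontier \<Omega> \<subseteq> closure \<Omega>"
  by (auto simp: frontier_def)

lemma bedge_subset_frontier:
  assumes "bedge \<Omega> p q" shows "closed_segment p q \<subseteq> frontier \<Omega>"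
proof -
  have "closed_segment p q \<noteq> closure \<Omega>"
    using interior_closure_eq domain_nonempty interior_closed_segment_ge2[of p q] by auto
  then show ?thesis
    using assms face_of_subset_rel_frontier frontier_eq_rel_frontier by (auto simp: bedge_def)
qed

lemma seg_in_frontier: "bedge \<Omega> p q \<Longrightarrow> t \<in> {0..1} \<Longrightarrow> seg p q t \<in> frontier \<Omega>"
  using bedge_subset_frontier seg_in_closed_segment by blast

text \<open>Edge endpoints are extreme points of the polygon, hence among its finitely many vertices.\<close>

lemma finite_bedges: "finite {(p, q). bedge \<Omega> p q}"
proof -
  obtain P where P: "finite P" "closure \<Omega> = convex hull P" using closure_eq_convex_hull by blast
  have "{(p, q). bedge \<Omega> p q} \<subseteq> P \<times> P"
  proof safe
    fix p q assume "bedge \<Omega> p q"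
    then have f: "closed_segment p q face_of convex hull P" using P by (simp add: bedge_def)
    have "p extreme_point_of closed_segment p q" "q extreme_point_of closed_segment p q"
      by (auto simp: extreme_point_of_segment)
    then show "p \<in> P" "q \<in> P"
      using extreme_point_of_face[OF f] extreme_point_of_convex_hull by auto
  qed
  then show ?thesis using P(1) finite_subset by blast
qed

text \<open>Every boundary point lies on a facet, and facets of a planar polytope are segments.\<close>

lemma frontier_covered_by_bedges:
  assumes x: "x \<in> frontier \<Omega>"
  shows "\<exists>p q. bedge \<Omega> p q \<and> x \<in> closed_segment p q"
proof -
  have "x \<in> \<Union> {F. F facet_of closure \<Omega>}"
    using x frontier_eq_rel_frontier rel_frontier_of_polyhedron[OF polytope_imp_polyhedron[OF polytope_closure]]
    by simp
  then obtain F where F: "F facet_of closure \<Omega>" "x \<in> F" by blast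
  have "aff_dim (closure \<Omega>) = 2"
    using aff_dim_nonempty_interior[of "closure \<Omega>"] interior_closure_eq domain_nonempty by simp
  then have F': "F face_of closure \<Omega>" "F \<noteq> {}" "aff_dim F = 1"
    using F(1) by (auto simp: facet_of_def)
  have pF: "polytope F" by (rule face_of_polytope_polytope[OF polytope_closure F'(1)])
  have "collinear F" using F'(3) by (simp add: collinear_aff_dim)
  then obtain p q where pq: "F = closed_segment p q"
    using compact_convex_collinear_segment[OF F'(2) polytope_imp_compact[OF pF] polytope_imp_convex[OF pF]]
    by blast
  have "p \<noteq> q" using F'(3) pq by auto
  then have "bedge \<Omega> p q" using F'(1) pq by (simp add: bedge_def)
  then show ?thesis using F(2) pq by blast
qed

lemma frontier_nonempty: "frontier \<Omega> \<noteq> {}"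
proof
  assume "frontier \<Omega> = {}"
  then have "closed \<Omega>" using open_domain by (simp add: frontier_def interior_open closure_subset_eq)
  then have "\<Omega> = UNIV" using clopen[of \<Omega>] open_domain domain_nonempty by blast
  then show False using bounded_domain not_bounded_UNIV by simp
qed

lemma bedge_exists: "\<exists>p q. bedge \<Omega> p q"
  using frontier_nonempty frontier_covered_by_bedges by blast

definition edgewise_integrable :: "((real^2) \<Rightarrow> real) \<Rightarrow> bool" where
  "edgewise_integrable F \<longleftrightarrow> (\<forall>p q. bedge \<Omega> p q \<longrightarrow> (\<lambda>t. F (seg p q t)) integrable_on {0..1})"

definition edgewise_continuous :: "((real^2) \<Rightarrow> real) \<Rightarrow> bool" where
  "edgewise_continuous F \<longleftrightarrow> (\<forall>p q. bedge \<Omega> p q \<longrightarrow> continuous_on {0..1} (\<lambda>t. F (seg p q t)))"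

lemma edgewise_continuous_imp_integrable: "edgewise_continuous F \<Longrightarrow> edgewise_integrable F"
  unfolding edgewise_continuous_def edgewise_integrable_def by (blast intro: integrable_continuous_real)

lemma edgewise_continuous_const: "edgewise_continuous (\<lambda>x. c)"
  unfolding edgewise_continuous_def by auto

lemma edgewise_continuous_add:
  "edgewise_continuous F \<Longrightarrow> edgewise_continuous G \<Longrightarrow> edgewise_continuous (\<lambda>x. F x + G x)"
  unfolding edgewise_continuous_def by (auto intro: continuous_on_add)

lemma edgewise_continuous_diff:
  "edgewise_continuous F \<Longrightarrow> edgewise_continuous G \<Longrightarrow> edgewise_continuous (\<lambda>x. F x - G x)"
  unfolding edgewise_continuous_def by (auto intro: continuous_on_diff)

lemma edgewise_continuous_mult:
  "edgewise_continuous F \<Longrightarrow> edgewise_continuous G \<Longrightarrow> edgewise_continuous (\<lambda>x. F x * G x)"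
  unfolding edgewise_continuous_def by (auto intro: continuous_on_mult)

lemma edgewise_continuous_abs: "edgewise_continuous F \<Longrightarrow> edgewise_continuous (\<lambda>x. \<bar>F x\<bar>)"
  unfolding edgewise_continuous_def by (auto intro: continuous_on_rabs)

lemma edgewise_continuous_bounded:
  assumes "edgewise_continuous F"
  shows "\<exists>B. \<forall>x\<in>frontier \<Omega>. \<bar>F x\<bar> \<le> B"
proof -
  have "\<forall>pq\<in>{(p, q). bedge \<Omega> p q}. \<exists>b. \<forall>t\<in>{0..1}. \<bar>F (seg (fst pq) (snd pq) t)\<bar> \<le> b"
  proof
    fix pq assume "pq \<in> {(p, q). bedge \<Omega> p q}"
    then have "continuous_on {0..1} (\<lambda>t. F (seg (fst pq) (snd pq) t))"
      using assms unfolding edgewise_continuous_def by auto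
    then show "\<exists>b. \<forall>t\<in>{0..1}. \<bar>F (seg (fst pq) (snd pq) t)\<bar> \<le> b" by (rule continuous_on_Icc_bound)
  qed
  then obtain B where B: "\<forall>pq\<in>{(p, q). bedge \<Omega> p q}. \<forall>t\<in>{0..1}. \<bar>F (seg (fst pq) (snd pq) t)\<bar> \<le> B"
    by (rule finite_family_uniform_bound[OF finite_bedges, THEN exE])
  have "\<bar>F x\<bar> \<le> B" if x: "x \<in> frontier \<Omega>" for x
  proof -
    obtain p q where "bedge \<Omega> p q" "x \<in> closed_segment p q"
      using frontier_covered_by_bedges[OF x] by blast
    moreover obtain t where "t \<in> {0..1}" "x = seg p q t"
      using closed_segment_eq_seg[OF \<open>x \<in> closed_segment p q\<close>] by blast
    ultimately show ?thesis using B by auto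
  qed
  then show ?thesis by blast
qed

lemma bint_add:
  assumes "edgewise_integrable F" "edgewise_integrable G"
  shows "bint \<Omega> (\<lambda>x. F x + G x) = bint \<Omega> F + bint \<Omega> G"
proof -
  have "(\<Sum>pq\<in>{(p, q). bedge \<Omega> p q}. dist (fst pq) (snd pq) *
          integral {0..1} (\<lambda>t. F (seg (fst pq) (snd pq) t) + G (seg (fst pq) (snd pq) t)))
      = (\<Sum>pq\<in>{(p, q). bedge \<Omega> p q}. dist (fst pq) (snd pq) * integral {0..1} (\<lambda>t. F (seg (fst pq) (snd pq) t))
          + dist (fst pq) (snd pq) * integral {0..1} (\<lambda>t. G (seg (fst pq) (snd pq) t)))"
    using assms unfolding edgewise_integrable_def by (intro sum.cong) (auto simp: integral_add distrib_left)
  then show ?thesis unfolding bint_def by (simp add: sum.distrib add_divide_distrib)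
qed

lemma bint_scale: "bint \<Omega> (\<lambda>x. c * F x) = c * bint \<Omega> F"
  unfolding bint_def by (simp add: sum_distrib_left mult_ac)

lemma bint_mono:
  assumes "edgewise_integrable F" "edgewise_integrable G" "\<And>x. x \<in> frontier \<Omega> \<Longrightarrow> F x \<le> G x"
  shows "bint \<Omega> F \<le> bint \<Omega> G"
  unfolding bint_def
proof (rule divide_right_mono[OF sum_mono])
  fix pq assume "pq \<in> {(p, q). bedge \<Omega> p q}"
  then show "dist (fst pq) (snd pq) * integral {0..1} (\<lambda>t. F (seg (fst pq) (snd pq) t))
      \<le> dist (fst pq) (snd pq) * integral {0..1} (\<lambda>t. G (seg (fst pq) (snd pq) t))"
    using assms seg_in_frontier unfolding edgewise_integrable_def by (intro mult_left_mono integral_le) auto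
qed simp

lemma bint_nonneg:
  "edgewise_integrable F \<Longrightarrow> (\<And>x. x \<in> frontier \<Omega> \<Longrightarrow> F x \<ge> 0) \<Longrightarrow> bint \<Omega> F \<ge> 0"
  using bint_mono[of "\<lambda>x. 0" F] bint_scale[of 0 "\<lambda>x. 0"]
  by (simp add: edgewise_continuous_imp_integrable edgewise_continuous_const)

lemma bint_abs_le:
  assumes "edgewise_continuous F"
  shows "\<bar>bint \<Omega> F\<bar> \<le> bint \<Omega> (\<lambda>x. \<bar>F x\<bar>)"
proof -
  have "edgewise_continuous (\<lambda>x. (-1) * F x)"
    by (rule edgewise_continuous_mult[OF edgewise_continuous_const assms])
  then have "bint \<Omega> (\<lambda>x. (-1) * F x) \<le> bint \<Omega> (\<lambda>x. \<bar>F x\<bar>)" "bint \<Omega> F \<le> bint \<Omega> (\<lambda>x. \<bar>F x\<bar>)"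
    using assms edgewise_continuous_abs edgewise_continuous_imp_integrable by (auto intro!: bint_mono)
  then show ?thesis using bint_scale[of "-1" F] by simp
qed

lemma bint_pos:
  assumes "edgewise_continuous F" "\<And>x. x \<in> frontier \<Omega> \<Longrightarrow> F x \<ge> m" "m > 0"
  shows "bint \<Omega> F > 0"
proof -
  have "(\<Sum>pq\<in>{(p, q). bedge \<Omega> p q}. dist (fst pq) (snd pq) * integral {0..1} (\<lambda>t. F (seg (fst pq) (snd pq) t))) > 0"
  proof (rule sum_pos[OF finite_bedges])
    show "{(p, q). bedge \<Omega> p q} \<noteq> {}" using bedge_exists by auto
    fix pq assume "pq \<in> {(p, q). bedge \<Omega> p q}"
    then have b: "bedge \<Omega> (fst pq) (snd pq)" by auto
    have "integral {0..1::real} (\<lambda>t. m) \<le> integral {0..1} (\<lambda>t. F (seg (fst pq) (snd pq) t))"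
      using assms b seg_in_frontier unfolding edgewise_continuous_def
      by (intro integral_le) (auto intro: integrable_continuous_real)
    then show "dist (fst pq) (snd pq) * integral {0..1} (\<lambda>t. F (seg (fst pq) (snd pq) t)) > 0"
      using b assms(3) by (simp add: bedge_def)
  qed
  then show ?thesis unfolding bint_def by simp
qed

lemma C1_bdryD:
  assumes "\<eta> \<in> C1_bdry \<Omega>"
  shows C1_bdry_has_edge_deriv: "bedge \<Omega> p q \<Longrightarrow> t \<in> {0..1} \<Longrightarrow>
      ((\<lambda>s. \<eta> (seg p q s)) has_real_derivative edge_deriv \<eta> p q t) (at t within {0..1})"
    and C1_bdry_edge_deriv_continuous: "bedge \<Omega> p q \<Longrightarrow> continuous_on {0..1} (edge_deriv \<eta> p q)"
    and C1_bdry_corner: "bedge \<Omega> q p \<Longrightarrow> bedge \<Omega> q r \<Longrightarrow> p \<noteq> r \<Longrightarrow>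
      edge_deriv \<eta> q p 0 / dist q p + edge_deriv \<eta> q r 0 / dist q r = 0"
  using assms unfolding C1_bdry_def by auto

lemma C1_bdry_edgewise_continuous: "\<eta> \<in> C1_bdry \<Omega> \<Longrightarrow> edgewise_continuous \<eta>"
  unfolding edgewise_continuous_def
  by (metis C1_bdry_has_edge_deriv DERIV_continuous_on)

lemma edge_deriv_diff:
  assumes "\<eta>1 \<in> C1_bdry \<Omega>" "\<eta>2 \<in> C1_bdry \<Omega>" "bedge \<Omega> p q" "t \<in> {0..1}"
  shows "edge_deriv (\<lambda>x. \<eta>1 x - \<eta>2 x) p q t = edge_deriv \<eta>1 p q t - edge_deriv \<eta>2 p q t"
  by (rule edge_deriv_eqI[where \<eta>="\<lambda>x. \<eta>1 x - \<eta>2 x", OF assms(4) DERIV_diff[OF C1_bdry_has_edge_deriv[OF assms(1,3,4)]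
        C1_bdry_has_edge_deriv[OF assms(2,3,4)]]])

lemma C1_bdry_diff:
  assumes \<eta>: "\<eta>1 \<in> C1_bdry \<Omega>" "\<eta>2 \<in> C1_bdry \<Omega>"
  shows "(\<lambda>x. \<eta>1 x - \<eta>2 x) \<in> C1_bdry \<Omega>"
  unfolding C1_bdry_def
proof (intro CollectI conjI allI impI ballI)
  fix p q t assume pq: "bedge \<Omega> p q" and t: "t \<in> {0..1::real}"
  show "((\<lambda>s. \<eta>1 (seg p q s) - \<eta>2 (seg p q s)) has_real_derivative
      edge_deriv (\<lambda>x. \<eta>1 x - \<eta>2 x) p q t) (at t within {0..1})"
    unfolding edge_deriv_diff[OF \<eta> pq t]
    by (rule DERIV_diff[OF C1_bdry_has_edge_deriv[OF \<eta>(1) pq t] C1_bdry_has_edge_deriv[OF \<eta>(2) pq t]])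
next
  fix p q assume pq: "bedge \<Omega> p q"
  have "continuous_on {0..1} (\<lambda>t. edge_deriv \<eta>1 p q t - edge_deriv \<eta>2 p q t)"
    by (rule continuous_on_diff[OF C1_bdry_edge_deriv_continuous[OF \<eta>(1) pq]
          C1_bdry_edge_deriv_continuous[OF \<eta>(2) pq]])
  then show "continuous_on {0..1} (edge_deriv (\<lambda>x. \<eta>1 x - \<eta>2 x) p q)"
    by (rule continuous_on_eq) (simp add: edge_deriv_diff[OF \<eta> pq])
next
  fix p q r assume pqr: "bedge \<Omega> q p \<and> bedge \<Omega> q r \<and> p \<noteq> r"
  then have "edge_deriv \<eta>1 q p 0 / dist q p + edge_deriv \<eta>1 q r 0 / dist q r = 0"
    "edge_deriv \<eta>2 q p 0 / dist q p + edge_deriv \<eta>2 q r 0 / dist q r = 0"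
    using C1_bdry_corner[OF \<eta>(1), of q p r] C1_bdry_corner[OF \<eta>(2), of q p r] by auto
  then show "edge_deriv (\<lambda>x. \<eta>1 x - \<eta>2 x) q p 0 / dist q p + edge_deriv (\<lambda>x. \<eta>1 x - \<eta>2 x) q r 0 / dist q r = 0"
    using pqr by (simp add: edge_deriv_diff[OF \<eta>] diff_divide_distrib)
qed

lemma C1_norm_bounds:
  assumes "\<eta> \<in> C1_bdry \<Omega>"
  shows abs_le_C1_norm: "x \<in> frontier \<Omega> \<Longrightarrow> \<bar>\<eta> x\<bar> \<le> C1_norm \<Omega> \<eta>"
    and C1_norm_nonneg: "C1_norm \<Omega> \<eta> \<ge> 0"
proof -
  define Z where "Z = {(p, q, t). bedge \<Omega> p q \<and> t \<in> {0..1::real}}"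
  define G where "G = (\<lambda>z. \<bar>edge_deriv \<eta> (fst z) (fst (snd z)) (snd (snd z))\<bar> / dist (fst z) (fst (snd z)))"
  have C: "C1_norm \<Omega> \<eta> = (SUP x\<in>frontier \<Omega>. \<bar>\<eta> x\<bar>) + (SUP z\<in>Z. G z)"
    unfolding C1_norm_def Z_def G_def by simp
  have bdd1: "bdd_above ((\<lambda>x. \<bar>\<eta> x\<bar>) ` frontier \<Omega>)"
    using edgewise_continuous_bounded[OF C1_bdry_edgewise_continuous[OF assms]]
    by (auto intro: bdd_aboveI2)
  have "\<forall>pq\<in>{(p, q). bedge \<Omega> p q}. \<exists>b. \<forall>t\<in>{0..1}. \<bar>G (fst pq, snd pq, t)\<bar> \<le> b"
  proof
    fix pq assume "pq \<in> {(p, q). bedge \<Omega> p q}"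
    then have "continuous_on {0..1} (\<lambda>t. G (fst pq, snd pq, t))"
      using C1_bdry_edge_deriv_continuous[OF assms] unfolding G_def
      by (auto intro!: continuous_intros simp: bedge_def)
    then show "\<exists>b. \<forall>t\<in>{0..1}. \<bar>G (fst pq, snd pq, t)\<bar> \<le> b" by (rule continuous_on_Icc_bound)
  qed
  then obtain B where "\<forall>pq\<in>{(p, q). bedge \<Omega> p q}. \<forall>t\<in>{0..1}. \<bar>G (fst pq, snd pq, t)\<bar> \<le> B"
    by (rule finite_family_uniform_bound[OF finite_bedges, THEN exE])
  then have bdd2: "bdd_above (G ` Z)"
    unfolding Z_def by (intro bdd_aboveI2[where M=B]) (auto simp: abs_le_iff)
  obtain p q where "bedge \<Omega> p q" using bedge_exists by blast
  then have "0 \<le> G (p, q, 0)" "(p, q, 0) \<in> Z" by (auto simp: G_def Z_def)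
  then have S2: "0 \<le> (SUP z\<in>Z. G z)" using cSUP_upper[OF _ bdd2] by (meson order_trans)
  show le: "\<bar>\<eta> x\<bar> \<le> C1_norm \<Omega> \<eta>" if "x \<in> frontier \<Omega>" for x
    using cSUP_upper[OF that bdd1] S2 C by simp
  obtain x where "x \<in> frontier \<Omega>" using frontier_nonempty by blast
  then show "C1_norm \<Omega> \<eta> \<ge> 0" using le[of x] by simp
qed

end

section \<open>The P1 finite element space\<close>

lemma grad_eqI:
  assumes "(f has_derivative (\<lambda>h. c \<bullet> h)) (at x)"
  shows "grad f x = c"
  unfolding grad_def
proof (rule the_equality)
  fix g assume "(f has_derivative (\<lambda>h. g \<bullet> h)) (at x)"
  then have "(\<lambda>h. g \<bullet> h) = (\<lambda>h. c \<bullet> h)" using has_derivative_unique assms by blast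
  then have "(g - c) \<bullet> (g - c) = 0" by (metis inner_diff_left right_minus_eq)
  then show "g = c" by simp
qed (fact assms)

locale triangulated_polygon = convex_polygon \<Omega> for \<Omega> +
  fixes T :: "(real^2) set set"
  assumes triangulation: "fe_triangulation T \<Omega>"
begin

abbreviation V where "V \<equiv> Vh T \<Omega>"

lemma finite_T: "finite T" and triangle_T: "K \<in> T \<Longrightarrow> triangle K" and Union_T: "\<Union>T = closure \<Omega>"
  using triangulation unfolding fe_triangulation_def by blast+

lemma cell_props:
  assumes "K \<in> T"
  shows cell_compact: "compact K" and cell_convex: "convex K"
    and cell_interior_nonempty: "interior K \<noteq> {}" and cell_subset_closure: "K \<subseteq> closure \<Omega>"
proof -
  obtain a b c where K: "K = convex hull {a, b, c}" "\<not> collinear {a, b, c}"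
    using triangle_T[OF assms] unfolding triangle_def by blast
  show "compact K" "convex K" using K by (auto simp: compact_convex_hull)
  have "a \<noteq> b" "a \<noteq> c" "b \<noteq> c" "\<not> affine_dependent {a, b, c}"
    using K(2) collinear_3_eq_affine_dependent[of a b c] by auto
  then show "interior K \<noteq> {}" using interior_convex_hull_eq_empty[of "{a, b, c}"] K by simp
  show "K \<subseteq> closure \<Omega>" using Union_T assms by auto
qed

definition cell_interiors :: "(real^2) set" where
  "cell_interiors = (\<Union>K\<in>T. interior K)"

lemma cell_interiors_subset: "cell_interiors \<subseteq> \<Omega>"
  using interior_mono[OF cell_subset_closure] interior_closure_eq by (auto simp: cell_interiors_def)

lemma lmeasurable_Int_cell_interiors: "open S \<Longrightarrow> S \<inter> cell_interiors \<in> lmeasurable"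
  using cell_interiors_subset bounded_domain
  by (intro lmeasurable_open) (auto simp: cell_interiors_def intro: bounded_subset)

text \<open>The cell boundaries are negligible, so integrals over subsets of \<open>\<Omega>\<close> only see
  the cell interiors, where finite element functions are smooth.\<close>

lemma negligible_diff_cell_interiors: "S \<subseteq> \<Omega> \<Longrightarrow> negligible (S - cell_interiors)"
proof (rule negligible_subset)
  show "negligible (\<Union>K\<in>T. frontier K)"
    using finite_T cell_convex negligible_convex_frontier by (intro negligible_Union) auto
  assume S: "S \<subseteq> \<Omega>"
  show "S - cell_interiors \<subseteq> (\<Union>K\<in>T. frontier K)"
  proof
    fix x assume x: "x \<in> S - cell_interiors"
    then obtain K where K: "K \<in> T" "x \<in> K" using S Union_T closure_subset by blast
    moreover have "x \<notin> interior K" using x K(1) by (auto simp: cell_interiors_def)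
    moreover have "closure K = K" using cell_compact[OF K(1)] by (simp add: compact_imp_closed)
    ultimately have "x \<in> frontier K" by (simp add: frontier_def)
    then show "x \<in> (\<Union>K\<in>T. frontier K)" using K by auto
  qed
qed

lemma Vh_affine_on_cell: "v \<in> V \<Longrightarrow> K \<in> T \<Longrightarrow> \<exists>c d. \<forall>y\<in>K. v y = c \<bullet> y + d"
  by (auto simp: Vh_def)

lemma Vh_grad_eq:
  assumes "K \<in> T" "\<forall>y\<in>K. v y = c \<bullet> y + d" "x \<in> interior K"
  shows "grad v x = c"
proof (rule grad_eqI)
  have "((\<lambda>y. c \<bullet> y + d) has_derivative (\<lambda>h. c \<bullet> h)) (at x)"
    by (auto intro!: derivative_eq_intros)
  then show "(v has_derivative (\<lambda>h. c \<bullet> h)) (at x)"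
    by (rule has_derivative_transform_within_open[OF _ open_interior assms(3)])
       (use assms(2) interior_subset in force)
qed

lemma fn_subspace_Vh: "fn_subspace V"
  unfolding fn_subspace_def
proof (intro conjI ballI allI)
  show "(\<lambda>x. 0) \<in> V" unfolding Vh_def by (auto intro!: exI[of _ 0])
next
  fix u v assume u: "u \<in> V" and v: "v \<in> V"
  show "(\<lambda>x. u x + v x) \<in> V"
    unfolding Vh_def
  proof safe
    fix K assume K: "K \<in> T"
    obtain c1 d1 c2 d2 where "\<forall>y\<in>K. u y = c1 \<bullet> y + d1" "\<forall>y\<in>K. v y = c2 \<bullet> y + d2"
      using Vh_affine_on_cell[OF u K] Vh_affine_on_cell[OF v K] by blast
    then show "\<exists>c d. \<forall>x\<in>K. u x + v x = c \<bullet> x + d"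
      by (intro exI[of _ "c1 + c2"] exI[of _ "d1 + d2"]) (simp add: inner_add_left)
  qed (use u v in \<open>simp add: Vh_def\<close>)
next
  fix u c assume u: "u \<in> V"
  show "(\<lambda>x. c * u x) \<in> V"
    unfolding Vh_def
  proof safe
    fix K assume K: "K \<in> T"
    obtain c1 d1 where "\<forall>y\<in>K. u y = c1 \<bullet> y + d1" using Vh_affine_on_cell[OF u K] by blast
    then show "\<exists>c' d. \<forall>x\<in>K. c * u x = c' \<bullet> x + d"
      by (intro exI[of _ "c *\<^sub>R c1"] exI[of _ "c * d1"]) (simp add: algebra_simps)
  qed (use u in \<open>simp add: Vh_def\<close>)
qed

lemma Vh_grad_add:
  assumes u: "u \<in> V" and v: "v \<in> V" and x: "x \<in> cell_interiors"
  shows "grad (\<lambda>y. u y + v y) x = grad u x + grad v x"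
proof -
  obtain K where K: "K \<in> T" "x \<in> interior K" using x by (auto simp: cell_interiors_def)
  obtain c1 d1 c2 d2 where 1: "\<forall>y\<in>K. u y = c1 \<bullet> y + d1" and 2: "\<forall>y\<in>K. v y = c2 \<bullet> y + d2"
    using Vh_affine_on_cell[OF u K(1)] Vh_affine_on_cell[OF v K(1)] by blast
  have 3: "\<forall>y\<in>K. u y + v y = (c1 + c2) \<bullet> y + (d1 + d2)" using 1 2 by (simp add: inner_add_left)
  show ?thesis using Vh_grad_eq[OF K(1) 1 K(2)] Vh_grad_eq[OF K(1) 2 K(2)] Vh_grad_eq[OF K(1) 3 K(2)] by simp
qed

lemma Vh_grad_scale:
  assumes u: "u \<in> V" and x: "x \<in> cell_interiors"
  shows "grad (\<lambda>y. c * u y) x = c *\<^sub>R grad u x"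
proof -
  obtain K where K: "K \<in> T" "x \<in> interior K" using x by (auto simp: cell_interiors_def)
  obtain c1 d1 where 1: "\<forall>y\<in>K. u y = c1 \<bullet> y + d1" using Vh_affine_on_cell[OF u K(1)] by blast
  have 2: "\<forall>y\<in>K. c * u y = (c *\<^sub>R c1) \<bullet> y + c * d1" using 1 by (simp add: algebra_simps)
  show ?thesis using Vh_grad_eq[OF K(1) 1 K(2)] Vh_grad_eq[OF K(1) 2 K(2)] by simp
qed

lemma Vh_continuous_on: "v \<in> V \<Longrightarrow> continuous_on (closure \<Omega>) v"
proof -
  assume v: "v \<in> V"
  have "continuous_on (\<Union>K\<in>T. K) v"
  proof (rule continuous_on_closed_Union[OF finite_T])
    fix K assume K: "K \<in> T"
    show "closed K" using cell_compact[OF K] compact_imp_closed by blast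
    obtain c d where "\<forall>y\<in>K. v y = c \<bullet> y + d" using Vh_affine_on_cell[OF v K] by blast
    then show "continuous_on K v"
      by (intro continuous_on_eq[of K "\<lambda>y. c \<bullet> y + d" v]) (auto intro!: continuous_intros)
  qed
  then show ?thesis using Union_T by simp
qed

lemma Vh_grad_on_cells:
  assumes v: "v \<in> V"
  shows "continuous_on cell_interiors (grad v)" "\<exists>B. \<forall>x\<in>cell_interiors. norm (grad v x) \<le> B"
proof -
  have cell: "\<exists>c. \<forall>x\<in>interior K. grad v x = c" if K: "K \<in> T" for K
  proof -
    obtain c d where cd: "\<forall>y\<in>K. v y = c \<bullet> y + d" using Vh_affine_on_cell[OF v K] by blast
    show ?thesis using Vh_grad_eq[OF K cd] by (intro exI[of _ c]) blast
  qed
  show "continuous_on cell_interiors (grad v)"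
    unfolding cell_interiors_def
  proof (rule continuous_on_open_Union)
    fix S assume "S \<in> interior ` T"
    then obtain K where K: "K \<in> T" "S = interior K" by blast
    then show "open S" by simp
    obtain c where c: "\<forall>x\<in>interior K. grad v x = c" using cell[OF K(1)] by blast
    show "continuous_on S (grad v)"
      unfolding K(2) by (rule continuous_on_eq[OF continuous_on_const[of _ c]]) (use c in simp)
  qed
  have "\<forall>K\<in>T. \<exists>b. \<forall>x\<in>interior K. \<bar>norm (grad v x)\<bar> \<le> b"
  proof
    fix K assume "K \<in> T"
    then obtain c where c: "\<forall>x\<in>interior K. grad v x = c" using cell by blast
    show "\<exists>b. \<forall>x\<in>interior K. \<bar>norm (grad v x)\<bar> \<le> b" using c by (intro exI[of _ "norm c"]) simp
  qed
  then obtain B where "\<forall>K\<in>T. \<forall>x\<in>interior K. \<bar>norm (grad v x)\<bar> \<le> B"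
    by (rule finite_family_uniform_bound[OF finite_T, THEN exE])
  then have "\<forall>x\<in>cell_interiors. norm (grad v x) \<le> B" unfolding cell_interiors_def by auto
  then show "\<exists>B. \<forall>x\<in>cell_interiors. norm (grad v x) \<le> B" ..
qed

lemma Vh_edgewise_continuous: "v \<in> V \<Longrightarrow> edgewise_continuous v"
  unfolding edgewise_continuous_def
proof (intro allI impI)
  fix p q assume v: "v \<in> V" and pq: "bedge \<Omega> p q"
  have "seg p q ` {0..1} \<subseteq> closure \<Omega>"
    using seg_in_frontier[OF pq] frontier_subset_closure by auto
  moreover have "continuous_on {0..1} (seg p q)" unfolding seg_def by (intro continuous_intros)
  ultimately show "continuous_on {0..1} (\<lambda>t. v (seg p q t))"
    using continuous_on_compose2[OF Vh_continuous_on[OF v]] by blast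
qed

definition bounded_cont_on_cells :: "((real^2) \<Rightarrow> real) \<Rightarrow> bool" where
  "bounded_cont_on_cells h \<longleftrightarrow> continuous_on cell_interiors h \<and> (\<exists>B. \<forall>x\<in>cell_interiors. \<bar>h x\<bar> \<le> B)"

lemma bounded_cont_on_cells_integrable:
  assumes h: "bounded_cont_on_cells h" and S: "open S" "S \<subseteq> \<Omega>"
  shows "h integrable_on (S \<inter> cell_interiors)" "h integrable_on S"
    "integral S h = integral (S \<inter> cell_interiors) h"
proof -
  obtain B where B: "\<forall>x\<in>cell_interiors. \<bar>h x\<bar> \<le> B" using h by (auto simp: bounded_cont_on_cells_def)
  have m: "S \<inter> cell_interiors \<in> lmeasurable" by (rule lmeasurable_Int_cell_interiors[OF S(1)])
  have "continuous_on (S \<inter> cell_interiors) h"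
    using h by (auto simp: bounded_cont_on_cells_def intro: continuous_on_subset)
  then have "h \<in> borel_measurable (lebesgue_on (S \<inter> cell_interiors))"
    by (rule continuous_imp_measurable_on_sets_lebesgue[OF _ fmeasurableD[OF m]])
  then show i: "h integrable_on (S \<inter> cell_interiors)"
    by (rule measurable_bounded_by_integrable_imp_integrable_real[OF _ integrable_on_const[OF m] _ fmeasurableD[OF m]])
       (use B in auto)
  have n1: "negligible {x \<in> S - S \<inter> cell_interiors. h x \<noteq> 0}"
    by (rule negligible_subset[OF negligible_diff_cell_interiors[OF S(2)]]) auto
  have "{x \<in> S \<inter> cell_interiors - S. h x \<noteq> 0} = {}" by blast
  then have n2: "negligible {x \<in> S \<inter> cell_interiors - S. h x \<noteq> 0}" by (metis negligible_empty)
  show "h integrable_on S" by (rule integrable_spike_set[OF i n2 n1])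
  show "integral S h = integral (S \<inter> cell_interiors) h" by (rule integral_spike_set[OF n1 n2])
qed

lemma bounded_cont_on_cells_integral_domain:
  assumes "bounded_cont_on_cells h"
  shows "h integrable_on cell_interiors" "integral \<Omega> h = integral cell_interiors h"
  using bounded_cont_on_cells_integrable[OF assms open_domain order_refl] cell_interiors_subset
  by (simp_all add: Int_absorb1)

lemma L2_times_bounded_cont_integrable:
  assumes f: "L2_on S f" and S: "open S" "S \<subseteq> \<Omega>" and h: "bounded_cont_on_cells h"
  shows "(\<lambda>x. f x * h x) integrable_on S"
proof -
  have m: "S \<inter> cell_interiors \<in> lmeasurable" by (rule lmeasurable_Int_cell_interiors[OF S(1)])
  have sd: "negligible (sym_diff S (S \<inter> cell_interiors))"
  proof -
    have "S - S \<inter> cell_interiors = S - cell_interiors" by blast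
    then show ?thesis using negligible_diff_cell_interiors[OF S(2)] by simp
  qed
  have "f measurable_on (S \<inter> cell_interiors)" "(\<lambda>x. (f x)\<^sup>2) integrable_on (S \<inter> cell_interiors)"
    using measurable_on_spike_set[OF _ sd] integrable_spike_set_eq[OF sd] f by (auto simp: L2_on_def)
  moreover obtain B where "\<forall>x\<in>cell_interiors. \<bar>h x\<bar> \<le> B" using h by (auto simp: bounded_cont_on_cells_def)
  moreover have "continuous_on (S \<inter> cell_interiors) h"
    using h by (auto simp: bounded_cont_on_cells_def intro: continuous_on_subset)
  then have "h \<in> borel_measurable (lebesgue_on (S \<inter> cell_interiors))"
    by (rule continuous_imp_measurable_on_sets_lebesgue[OF _ fmeasurableD[OF m]])
  ultimately have "(\<lambda>x. f x * h x) integrable_on (S \<inter> cell_interiors)"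
    using L2_times_bounded_integrable[OF m] by blast
  then show ?thesis by (rule integrable_spike_set_eq[OF sd, THEN iffD2])
qed

lemma bounded_cont_on_cells_mult:
  assumes "bounded_cont_on_cells h1" "bounded_cont_on_cells h2"
  shows "bounded_cont_on_cells (\<lambda>x. h1 x * h2 x)"
proof -
  obtain B1 B2 where "\<forall>x\<in>cell_interiors. \<bar>h1 x\<bar> \<le> B1" "\<forall>x\<in>cell_interiors. \<bar>h2 x\<bar> \<le> B2"
    using assms by (auto simp: bounded_cont_on_cells_def)
  then have "\<forall>x\<in>cell_interiors. \<bar>h1 x * h2 x\<bar> \<le> B1 * B2"
    by (auto simp: abs_mult intro!: mult_mono)
  then show ?thesis using assms by (auto simp: bounded_cont_on_cells_def intro: continuous_on_mult)
qed

lemma bounded_cont_on_cells_Vh: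
  assumes v: "v \<in> V"
  shows "bounded_cont_on_cells v"
proof -
  have sub: "cell_interiors \<subseteq> closure \<Omega>" using cell_interiors_subset closure_subset by blast
  obtain B where "\<forall>x\<in>closure \<Omega>. norm (v x) \<le> B"
    using continuous_on_compact_bound[OF compact_closure[THEN iffD2, OF bounded_domain] Vh_continuous_on[OF v]]
    by metis
  then show ?thesis
    unfolding bounded_cont_on_cells_def using continuous_on_subset[OF Vh_continuous_on[OF v] sub] sub
    by auto
qed

lemma bounded_cont_on_cells_grad:
  assumes u: "u \<in> V" and v: "v \<in> V"
  shows "bounded_cont_on_cells (\<lambda>x. grad u x \<bullet> grad v x)"
proof -
  obtain B1 B2 where B: "\<forall>x\<in>cell_interiors. norm (grad u x) \<le> B1" "\<forall>x\<in>cell_interiors. norm (grad v x) \<le> B2"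
    using Vh_grad_on_cells(2)[OF u] Vh_grad_on_cells(2)[OF v] by blast
  have "\<bar>grad u x \<bullet> grad v x\<bar> \<le> B1 * B2" if "x \<in> cell_interiors" for x
  proof -
    have "norm (grad u x) * norm (grad v x) \<le> B1 * B2"
      using B that by (intro mult_mono) (auto intro: order_trans[OF norm_ge_zero])
    then show ?thesis using Cauchy_Schwarz_ineq2[of "grad u x" "grad v x"] by linarith
  qed
  then show ?thesis
    unfolding bounded_cont_on_cells_def
    using continuous_on_inner[OF Vh_grad_on_cells(1)[OF u] Vh_grad_on_cells(1)[OF v]] by blast
qed

definition stiffness :: "((real^2) \<Rightarrow> real) \<Rightarrow> ((real^2) \<Rightarrow> real) \<Rightarrow> real" where
  "stiffness u v = integral \<Omega> (\<lambda>x. grad u x \<bullet> grad v x)"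

definition mass :: "(real^2) set \<Rightarrow> ((real^2) \<Rightarrow> real) \<Rightarrow> ((real^2) \<Rightarrow> real) \<Rightarrow> real" where
  "mass S u v = integral S (\<lambda>x. u x * v x)"

definition robin :: "((real^2) \<Rightarrow> real) \<Rightarrow> ((real^2) \<Rightarrow> real) \<Rightarrow> ((real^2) \<Rightarrow> real) \<Rightarrow> real" where
  "robin \<alpha> u v = bint \<Omega> (\<lambda>x. \<alpha> x * u x * v x)"

lemma bform_eq: "bform \<Omega> \<alpha> u v = stiffness u v + robin \<alpha> u v"
  unfolding bform_def stiffness_def robin_def ..

lemma stiffness_bilinear: "bilinear_on V stiffness" and stiffness_symmetric: "symmetric_on V stiffness"
proof -
  show s: "symmetric_on V stiffness" unfolding symmetric_on_def stiffness_def by (simp add: inner_commute)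
  have cells: "stiffness u v = integral cell_interiors (\<lambda>x. grad u x \<bullet> grad v x)" if "u \<in> V" "v \<in> V" for u v
    unfolding stiffness_def by (rule bounded_cont_on_cells_integral_domain(2)[OF bounded_cont_on_cells_grad[OF that]])
  have int: "(\<lambda>x. grad u x \<bullet> grad v x) integrable_on cell_interiors" if "u \<in> V" "v \<in> V" for u v
    by (rule bounded_cont_on_cells_integral_domain(1)[OF bounded_cont_on_cells_grad[OF that]])
  show "bilinear_on V stiffness"
  proof (rule bilinear_on_symmetric[OF fn_subspace_Vh s])
    fix u assume u: "u \<in> V"
    show "linear_on V (stiffness u)"
      unfolding linear_on_def
    proof (intro conjI ballI allI)
      fix v1 v2 assume v: "v1 \<in> V" "v2 \<in> V"
      have "stiffness u (\<lambda>x. v1 x + v2 x)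
          = integral cell_interiors (\<lambda>x. grad u x \<bullet> grad v1 x + grad u x \<bullet> grad v2 x)"
        using cells[OF u fn_subspace_add[OF fn_subspace_Vh v]] Vh_grad_add[OF v]
        by (simp add: inner_add_right cong: integral_cong)
      then show "stiffness u (\<lambda>x. v1 x + v2 x) = stiffness u v1 + stiffness u v2"
        using int[OF u v(1)] int[OF u v(2)] cells[OF u v(1)] cells[OF u v(2)] by (simp add: integral_add)
    next
      fix v c assume v: "v \<in> V"
      have "stiffness u (\<lambda>x. c * v x) = integral cell_interiors (\<lambda>x. c * (grad u x \<bullet> grad v x))"
        using cells[OF u fn_subspace_scale[OF fn_subspace_Vh v]] Vh_grad_scale[OF v]
        by (simp cong: integral_cong)
      then show "stiffness u (\<lambda>x. c * v x) = c * stiffness u v" using cells[OF u v] by simp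
    qed
  qed
qed

lemma mass_bilinear:
  assumes S: "open S" "S \<subseteq> \<Omega>"
  shows "bilinear_on V (mass S)"
proof (rule bilinear_on_symmetric[OF fn_subspace_Vh])
  show "symmetric_on V (mass S)" unfolding symmetric_on_def mass_def by (simp add: mult.commute)
  have int: "(\<lambda>x. u x * v x) integrable_on S" if "u \<in> V" "v \<in> V" for u v
    using bounded_cont_on_cells_integrable(2)[OF bounded_cont_on_cells_mult S]
      bounded_cont_on_cells_Vh that by blast
  fix u assume "u \<in> V"
  then show "linear_on V (mass S u)"
    unfolding linear_on_def mass_def using int
    by (simp add: distrib_left integral_add mult.left_commute[of _ c for c])
qed

lemma robin_bilinear: "edgewise_continuous \<alpha> \<Longrightarrow> bilinear_on V (robin \<alpha>)"
  and robin_symmetric: "symmetric_on V (robin \<alpha>)"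
proof -
  show s: "symmetric_on V (robin \<alpha>)" unfolding symmetric_on_def robin_def by (simp add: mult_ac)
  assume \<alpha>: "edgewise_continuous \<alpha>"
  have int: "edgewise_integrable (\<lambda>x. \<alpha> x * u x * v x)" if "u \<in> V" "v \<in> V" for u v
    using \<alpha> that Vh_edgewise_continuous
    by (intro edgewise_continuous_imp_integrable edgewise_continuous_mult) auto
  show "bilinear_on V (robin \<alpha>)"
  proof (rule bilinear_on_symmetric[OF fn_subspace_Vh s])
    fix u assume u: "u \<in> V"
    show "linear_on V (robin \<alpha> u)"
      unfolding linear_on_def robin_def
    proof (intro conjI ballI allI)
      fix v1 v2 assume "v1 \<in> V" "v2 \<in> V"
      then show "bint \<Omega> (\<lambda>x. \<alpha> x * u x * (v1 x + v2 x))
          = bint \<Omega> (\<lambda>x. \<alpha> x * u x * v1 x) + bint \<Omega> (\<lambda>x. \<alpha> x * u x * v2 x)"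
        using bint_add[OF int[OF u] int[OF u]] by (simp add: distrib_left)
    next
      fix v c
      show "bint \<Omega> (\<lambda>x. \<alpha> x * u x * (c * v x)) = c * bint \<Omega> (\<lambda>x. \<alpha> x * u x * v x)"
        using bint_scale[of c "\<lambda>x. \<alpha> x * u x * v x"] by (simp add: mult_ac)
    qed
  qed
qed

lemma robin_add_coeff:
  assumes "edgewise_continuous \<beta>" "edgewise_continuous \<gamma>" "u \<in> V" "v \<in> V"
  shows "robin (\<lambda>x. \<beta> x + \<gamma> x) u v = robin \<beta> u v + robin \<gamma> u v"
proof -
  have "edgewise_integrable (\<lambda>x. \<delta> x * u x * v x)" if "edgewise_continuous \<delta>" for \<delta>
    using that assms(3,4) Vh_edgewise_continuous
    by (intro edgewise_continuous_imp_integrable edgewise_continuous_mult) auto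
  then show ?thesis
    unfolding robin_def using bint_add assms(1,2) by (simp add: distrib_right)
qed

lemma robin_scale_coeff: "robin (\<lambda>x. c * \<beta> x) u v = c * robin \<beta> u v"
  unfolding robin_def using bint_scale[of c "\<lambda>x. \<beta> x * u x * v x"] by (simp add: mult_ac)

lemma bform_add_coeff:
  "edgewise_continuous \<beta> \<Longrightarrow> edgewise_continuous \<gamma> \<Longrightarrow> u \<in> V \<Longrightarrow> v \<in> V \<Longrightarrow>
    bform \<Omega> (\<lambda>x. \<beta> x + \<gamma> x) u v = bform \<Omega> \<beta> u v + robin \<gamma> u v"
  by (simp add: bform_eq robin_add_coeff)

lemma robin_bound:
  assumes \<eta>: "edgewise_continuous \<eta>" "\<And>x. x \<in> frontier \<Omega> \<Longrightarrow> \<bar>\<eta> x\<bar> \<le> s"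
    and u: "u \<in> V" and v: "v \<in> V"
  shows "\<bar>robin \<eta> u v\<bar> \<le> s * bint \<Omega> (\<lambda>x. \<bar>u x * v x\<bar>)"
proof -
  have uv: "edgewise_continuous (\<lambda>x. u x * v x)"
    by (rule edgewise_continuous_mult[OF Vh_edgewise_continuous[OF u] Vh_edgewise_continuous[OF v]])
  have F: "edgewise_continuous (\<lambda>x. \<eta> x * u x * v x)"
    using edgewise_continuous_mult[OF \<eta>(1) uv] by (simp add: mult.assoc)
  have "\<bar>robin \<eta> u v\<bar> \<le> bint \<Omega> (\<lambda>x. \<bar>\<eta> x * u x * v x\<bar>)"
    unfolding robin_def by (rule bint_abs_le[OF F])
  also have "\<dots> \<le> bint \<Omega> (\<lambda>x. s * \<bar>u x * v x\<bar>)"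
  proof (rule bint_mono)
    show "edgewise_integrable (\<lambda>x. \<bar>\<eta> x * u x * v x\<bar>)" "edgewise_integrable (\<lambda>x. s * \<bar>u x * v x\<bar>)"
      using F uv
      by (auto intro!: edgewise_continuous_imp_integrable edgewise_continuous_mult
          edgewise_continuous_abs edgewise_continuous_const)
    show "\<bar>\<eta> x * u x * v x\<bar> \<le> s * \<bar>u x * v x\<bar>" if "x \<in> frontier \<Omega>" for x
      using \<eta>(2)[OF that] by (simp add: abs_mult mult_right_mono mult.assoc)
  qed
  also have "\<dots> = s * bint \<Omega> (\<lambda>x. \<bar>u x * v x\<bar>)" by (rule bint_scale)
  finally show ?thesis .
qed

lemma stiffness_nonneg: "u \<in> V \<Longrightarrow> stiffness u u \<ge> 0"
  unfolding stiffness_def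
  by (rule integral_nonneg[OF bounded_cont_on_cells_integrable(2)[OF bounded_cont_on_cells_grad open_domain order_refl]]) auto

lemma bform_bilinear: "edgewise_continuous \<alpha> \<Longrightarrow> bilinear_on V (bform \<Omega> \<alpha>)"
  and bform_symmetric: "symmetric_on V (bform \<Omega> \<alpha>)"
  using bilinear_on_add[OF stiffness_bilinear robin_bilinear]
    symmetric_on_add[OF stiffness_symmetric robin_symmetric]
  by (simp_all add: bform_eq[abs_def])

lemma H1_norm_eq:
  assumes w: "w \<in> V"
  shows "H1_norm \<Omega> w = sqrt (mass \<Omega> w w + stiffness w w)"
proof -
  have "(\<lambda>x. (w x)\<^sup>2 + (norm (grad w x))\<^sup>2) = (\<lambda>x. w x * w x + grad w x \<bullet> grad w x)"
    by (rule ext) (simp add: dot_square_norm power2_eq_square)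
  moreover have "(\<lambda>x. w x * w x) integrable_on \<Omega>" "(\<lambda>x. grad w x \<bullet> grad w x) integrable_on \<Omega>"
    using bounded_cont_on_cells_integrable(2)[OF _ open_domain order_refl]
      bounded_cont_on_cells_mult[OF bounded_cont_on_cells_Vh[OF w] bounded_cont_on_cells_Vh[OF w]]
      bounded_cont_on_cells_grad[OF w w] by blast+
  ultimately show ?thesis unfolding H1_norm_def mass_def stiffness_def by (simp add: integral_add)
qed

definition cell_point :: "(real^2) set \<Rightarrow> real^2" where
  "cell_point K = (SOME x. x \<in> interior K)"

lemma cell_point: "K \<in> T \<Longrightarrow> cell_point K \<in> interior K"
  unfolding cell_point_def using cell_interior_nonempty by (metis ex_in_conv someI_ex)

text \<open>Value and gradient at one interior point of every cell determine a P1 function.\<close>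

definition dofs :: "(((real^2) \<Rightarrow> real) \<Rightarrow> real) set" where
  "dofs = (\<lambda>K v. v (cell_point K)) ` T \<union> (\<lambda>(K, i) v. grad v (cell_point K) $ i) ` (T \<times> UNIV)"

lemma finite_dofs: "finite dofs"
  unfolding dofs_def using finite_T by simp

lemma dofs_linear: "\<forall>\<phi>\<in>dofs. linear_on V \<phi>"
proof
  fix \<phi> assume "\<phi> \<in> dofs"
  then consider (val) K where "K \<in> T" "\<phi> = (\<lambda>v. v (cell_point K))"
    | (grad) K i where "K \<in> T" "\<phi> = (\<lambda>v. grad v (cell_point K) $ i)"
    unfolding dofs_def by auto
  then show "linear_on V \<phi>"
  proof cases
    case val
    then show ?thesis by (simp add: linear_on_def)
  next
    case grad
    then have "cell_point K \<in> cell_interiors" using cell_point by (auto simp: cell_interiors_def)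
    then show ?thesis using grad Vh_grad_add Vh_grad_scale by (simp add: linear_on_def)
  qed
qed

lemma dofs_unisolvent: "\<forall>v\<in>V. (\<forall>\<phi>\<in>dofs. \<phi> v = 0) \<longrightarrow> v = (\<lambda>x. 0)"
proof (intro ballI impI ext)
  fix v y assume v: "v \<in> V" and zero: "\<forall>\<phi>\<in>dofs. \<phi> v = 0"
  show "v y = 0"
  proof (cases "y \<in> closure \<Omega>")
    case False
    then show ?thesis using v by (simp add: Vh_def)
  next
    case True
    then obtain K where K: "K \<in> T" "y \<in> K" using Union_T by blast
    obtain c d where cd: "\<forall>y\<in>K. v y = c \<bullet> y + d" using Vh_affine_on_cell[OF v K(1)] by blast
    have "grad v (cell_point K) $ i = 0" for i using zero K(1) unfolding dofs_def by force
    then have c: "c = 0" using Vh_grad_eq[OF K(1) cd cell_point[OF K(1)]] by (simp add: vec_eq_iff)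
    have "v (cell_point K) = 0" using zero K(1) unfolding dofs_def by force
    then have "d = 0" using cd cell_point[OF K(1)] interior_subset c by force
    then show ?thesis using cd K c by simp
  qed
qed

lemma bform_unique_solution:
  assumes "edgewise_continuous \<alpha>" "pos_def_on V (bform \<Omega> \<alpha>)" "linear_on V L"
  shows "\<exists>!u. u \<in> V \<and> (\<forall>v\<in>V. bform \<Omega> \<alpha> u v = L v)"
  by (rule galerkin_unique_solution[OF finite_dofs fn_subspace_Vh dofs_linear dofs_unisolvent
        bform_bilinear[OF assms(1)] bform_symmetric assms(2,3)])

lemma stiffness_zero_imp_grad_zero:
  assumes u: "u \<in> V" and A: "stiffness u u = 0" and K: "K \<in> T" and cd: "\<forall>y\<in>K. u y = c \<bullet> y + d"
  shows "c = 0"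
proof -
  obtain lo hi where box: "cbox lo hi \<subseteq> interior K" "cell_point K \<in> box lo hi"
      "\<forall>i\<in>Basis. lo \<bullet> i < hi \<bullet> i"
    by (rule open_contains_cbox[OF open_interior cell_point[OF K]])
  have gc: "grad u x \<bullet> grad u x = c \<bullet> c" if "x \<in> cbox lo hi" for x
    using Vh_grad_eq[OF K cd] box(1) that by auto
  have int: "(\<lambda>x. grad u x \<bullet> grad u x) integrable_on cbox lo hi"
    by (rule integrable_eq[OF integrable_const[of "c \<bullet> c"]]) (simp add: gc)
  have "integral (cbox lo hi) (\<lambda>x. grad u x \<bullet> grad u x) = integral (cbox lo hi) (\<lambda>x. c \<bullet> c)"
    by (rule integral_cong) (rule gc)
  then have "measure lborel (cbox lo hi) * (c \<bullet> c) = integral (cbox lo hi) (\<lambda>x. grad u x \<bullet> grad u x)"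
    by simp
  also have "\<dots> \<le> integral cell_interiors (\<lambda>x. grad u x \<bullet> grad u x)"
  proof (rule integral_subset_le[OF _ int])
    show "cbox lo hi \<subseteq> cell_interiors" using box(1) K unfolding cell_interiors_def by blast
    show "(\<lambda>x. grad u x \<bullet> grad u x) integrable_on cell_interiors"
      by (rule bounded_cont_on_cells_integral_domain(1)[OF bounded_cont_on_cells_grad[OF u u]])
  qed auto
  also have "\<dots> = 0"
    using A bounded_cont_on_cells_integral_domain(2)[OF bounded_cont_on_cells_grad[OF u u]]
    by (simp add: stiffness_def)
  finally have "measure lborel (cbox lo hi) * (c \<bullet> c) \<le> 0" .
  moreover have "measure lborel (cbox lo hi) > 0" using box(3) by (simp add: content_pos_lt_eq)
  ultimately have "c \<bullet> c \<le> 0" by (simp add: mult_le_0_iff)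
  then show "c = 0" using inner_ge_zero[of c] by simp
qed

text \<open>A P1 function with vanishing stiffness energy is constant on every cell, so it takes
  finitely many values on the connected set \<open>closure \<Omega>\<close>.\<close>

lemma stiffness_zero_imp_constant:
  assumes u: "u \<in> V" and A: "stiffness u u = 0"
  shows "\<exists>k. \<forall>y\<in>closure \<Omega>. u y = k"
proof -
  have "u ` closure \<Omega> \<subseteq> (\<lambda>K. u (cell_point K)) ` T"
  proof
    fix z assume "z \<in> u ` closure \<Omega>"
    then obtain y where y: "y \<in> closure \<Omega>" "z = u y" by blast
    then obtain K where K: "K \<in> T" "y \<in> K" using Union_T by blast
    obtain c d where cd: "\<forall>y\<in>K. u y = c \<bullet> y + d" using Vh_affine_on_cell[OF u K(1)] by blast
    have "c = 0" by (rule stiffness_zero_imp_grad_zero[OF u A K(1) cd])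
    then have "u y = u (cell_point K)" using cd K cell_point[OF K(1)] interior_subset by force
    then show "z \<in> (\<lambda>K. u (cell_point K)) ` T" using y K by blast
  qed
  then have "finite (u ` closure \<Omega>)" using finite_subset finite_T by blast
  moreover have "connected (u ` closure \<Omega>)"
    by (rule connected_continuous_image[OF Vh_continuous_on[OF u]
          convex_connected[OF convex_closure[OF convex_domain]]])
  moreover have "u ` closure \<Omega> \<noteq> {}" using domain_nonempty closure_subset by blast
  ultimately obtain k where "u ` closure \<Omega> = {k}" using connected_finite_iff_sing by blast
  then show ?thesis by blast
qed

lemma bform_pos_def:
  assumes \<alpha>: "edgewise_continuous \<alpha>" "\<And>x. x \<in> frontier \<Omega> \<Longrightarrow> \<alpha> x \<ge> m" "m > 0"
  shows "pos_def_on V (bform \<Omega> \<alpha>)"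
  unfolding pos_def_on_def
proof (intro ballI impI)
  fix u assume u: "u \<in> V" and nz: "u \<noteq> (\<lambda>x. 0)"
  have uu: "edgewise_continuous (\<lambda>x. \<alpha> x * u x * u x)"
    using \<alpha>(1) Vh_edgewise_continuous[OF u] by (intro edgewise_continuous_mult)
  have "\<alpha> x * u x * u x \<ge> 0" if "x \<in> frontier \<Omega>" for x
    using \<alpha>(2)[OF that] \<alpha>(3) by (simp add: mult.assoc mult_nonneg_nonneg)
  then have R: "robin \<alpha> u u \<ge> 0"
    unfolding robin_def by (rule bint_nonneg[OF edgewise_continuous_imp_integrable[OF uu]])
  show "bform \<Omega> \<alpha> u u > 0"
  proof (rule ccontr)
    assume "\<not> bform \<Omega> \<alpha> u u > 0"
    then have A: "stiffness u u = 0" and B: "robin \<alpha> u u = 0"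
      using stiffness_nonneg[OF u] R by (auto simp: bform_eq)
    obtain k where k: "\<forall>y\<in>closure \<Omega>. u y = k" using stiffness_zero_imp_constant[OF u A] by blast
    have "k \<noteq> 0" using nz k u by (auto simp: Vh_def fun_eq_iff)
    have "robin \<alpha> u u > 0"
      unfolding robin_def
    proof (rule bint_pos[OF uu])
      show "m * (k * k) > 0" using \<open>k \<noteq> 0\<close> \<alpha>(3) by (simp add: zero_less_mult_iff linorder_neq_iff disj_commute)
      fix x assume x: "x \<in> frontier \<Omega>"
      have "u x = k" using x k frontier_subset_closure by blast
      then show "\<alpha> x * u x * u x \<ge> m * (k * k)"
        using mult_right_mono[OF \<alpha>(2)[OF x], of "k * k"] by (simp add: mult.assoc)
    qed
    then show False using B by simp
  qed
qed

end

section \<open>The discrete Robin problem and its adjoint\<close>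

locale robin_problem = triangulated_polygon \<Omega> T for \<Omega> T +
  fixes \<omega> :: "(real^2) set" and f g q a :: "real^2 \<Rightarrow> real" and a0 :: real
  assumes open_obs: "open \<omega>" and obs_subset: "\<omega> \<subseteq> \<Omega>"
    and f_L2: "L2_on \<Omega> f" and g_H12: "H12_bdry \<Omega> g" and q_L2: "L2_on \<omega> q"
    and a0_pos: "a0 > 0" and a_C1: "a \<in> C1_bdry \<Omega>" and a_ge: "\<forall>x\<in>frontier \<Omega>. a x \<ge> a0"
begin

lemma g_times_Vh_edgewise_integrable:
  assumes v: "v \<in> V"
  shows "edgewise_integrable (\<lambda>x. g x * v x)"
  unfolding edgewise_integrable_def
proof (intro allI impI)
  fix p q assume pq: "bedge \<Omega> p q"
  have g: "(\<lambda>t. g (seg p q t)) measurable_on {0..1}" "(\<lambda>t. (g (seg p q t))\<^sup>2) integrable_on {0..1}"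
    using g_H12 pq unfolding H12_bdry_def by auto
  have c: "continuous_on {0..1} (\<lambda>t. v (seg p q t))"
    using Vh_edgewise_continuous[OF v] pq unfolding edgewise_continuous_def by blast
  then have "(\<lambda>t. v (seg p q t)) \<in> borel_measurable (lebesgue_on {0..1})"
    by (rule continuous_imp_measurable_on_sets_lebesgue) simp
  moreover obtain B where "\<forall>t\<in>{0..1}. \<bar>v (seg p q t)\<bar> \<le> B" using continuous_on_Icc_bound[OF c] by blast
  ultimately show "(\<lambda>t. g (seg p q t) * v (seg p q t)) integrable_on {0..1}"
    using L2_times_bounded_integrable[OF _ g] by simp
qed

lemma lform_linear: "linear_on V (lform \<Omega> f g)"
  unfolding linear_on_def lform_def
proof (intro conjI ballI allI)
  fix v1 v2 assume v: "v1 \<in> V" "v2 \<in> V"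
  have "bint \<Omega> (\<lambda>x. g x * (v1 x + v2 x)) = bint \<Omega> (\<lambda>x. g x * v1 x) + bint \<Omega> (\<lambda>x. g x * v2 x)"
    using bint_add[OF g_times_Vh_edgewise_integrable[OF v(1)] g_times_Vh_edgewise_integrable[OF v(2)]]
    by (simp add: distrib_left)
  moreover have "integral \<Omega> (\<lambda>x. f x * (v1 x + v2 x)) = integral \<Omega> (\<lambda>x. f x * v1 x) + integral \<Omega> (\<lambda>x. f x * v2 x)"
    using L2_times_bounded_cont_integrable[OF f_L2 open_domain order_refl bounded_cont_on_cells_Vh] v
    by (simp add: distrib_left integral_add)
  ultimately show "bint \<Omega> (\<lambda>x. g x * (v1 x + v2 x)) - integral \<Omega> (\<lambda>x. f x * (v1 x + v2 x)) =
      bint \<Omega> (\<lambda>x. g x * v1 x) - integral \<Omega> (\<lambda>x. f x * v1 x)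
      + (bint \<Omega> (\<lambda>x. g x * v2 x) - integral \<Omega> (\<lambda>x. f x * v2 x))" by simp
next
  fix v c
  show "bint \<Omega> (\<lambda>x. g x * (c * v x)) - integral \<Omega> (\<lambda>x. f x * (c * v x)) =
      c * (bint \<Omega> (\<lambda>x. g x * v x) - integral \<Omega> (\<lambda>x. f x * v x))"
    using bint_scale[of c "\<lambda>x. g x * v x"] integral_mult_right[of \<Omega> c "\<lambda>x. f x * v x"]
    by (simp add: mult_ac right_diff_distrib)
qed

definition q_load :: "((real^2) \<Rightarrow> real) \<Rightarrow> real" where
  "q_load v = integral \<omega> (\<lambda>x. q x * v x)"

lemma q_load_linear: "linear_on V q_load"
  unfolding linear_on_def q_load_def
  using L2_times_bounded_cont_integrable[OF q_L2 open_obs obs_subset bounded_cont_on_cells_Vh]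
    integral_mult_right[of \<omega>]
  by (simp add: distrib_left integral_add mult.left_commute)

lemma adjoint_load_eq:
  assumes u: "u \<in> V" and v: "v \<in> V"
  shows "- integral \<omega> (\<lambda>x. (q x - u x) * v x) = mass \<omega> u v - q_load v"
proof -
  have "(\<lambda>x. q x * v x) integrable_on \<omega>"
    by (rule L2_times_bounded_cont_integrable[OF q_L2 open_obs obs_subset bounded_cont_on_cells_Vh[OF v]])
  moreover have "(\<lambda>x. u x * v x) integrable_on \<omega>"
    using bounded_cont_on_cells_integrable(2)[OF _ open_obs obs_subset]
      bounded_cont_on_cells_mult[OF bounded_cont_on_cells_Vh[OF u] bounded_cont_on_cells_Vh[OF v]] by blast
  ultimately show ?thesis
    by (simp add: mass_def q_load_def left_diff_distrib integral_diff)
qed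

lemma mass_obs_bilinear: "bilinear_on V (mass \<omega>)"
  by (rule mass_bilinear[OF open_obs obs_subset])

lemma adjoint_load_linear: "u \<in> V \<Longrightarrow> linear_on V (\<lambda>v. - integral \<omega> (\<lambda>x. (q x - u x) * v x))"
  by (rule linear_on_cong[OF linear_on_diff_fun[OF bilinear_on_right[OF mass_obs_bilinear] q_load_linear]])
     (simp_all add: adjoint_load_eq fn_subspace_Vh)

lemma a_edgewise_continuous: "edgewise_continuous a"
  by (rule C1_bdry_edgewise_continuous[OF a_C1])

abbreviation ba where "ba \<equiv> bform \<Omega> a"

lemma ba_bilinear: "bilinear_on V ba" and ba_symmetric: "symmetric_on V ba"
  and ba_pos_def: "pos_def_on V ba"
  using bform_bilinear[OF a_edgewise_continuous] bform_symmetric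
    bform_pos_def[OF a_edgewise_continuous _ a0_pos] a_ge by auto

definition energy_basis :: "((real^2) \<Rightarrow> real) set" where
  "energy_basis = (SOME E. orthonormal_basis V ba E)"

lemma energy_basis: "orthonormal_basis V ba energy_basis"
  unfolding energy_basis_def
  by (rule someI_ex[OF orthonormal_basis_exists[OF finite_dofs fn_subspace_Vh dofs_linear
        dofs_unisolvent ba_bilinear ba_symmetric ba_pos_def]])

lemma energy_basis_subset: "energy_basis \<subseteq> V"
  by (rule orthonormal_basisD(2)[OF energy_basis])

definition energy_norm :: "((real^2) \<Rightarrow> real) \<Rightarrow> real" where
  "energy_norm w = sqrt (ba w w)"

lemma energy_norm_nonneg: "w \<in> V \<Longrightarrow> energy_norm w \<ge> 0"
  unfolding energy_norm_def
  by (rule real_sqrt_ge_zero[OF orthonormal_basis_nonneg[OF energy_basis fn_subspace_Vh ba_bilinear]])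

lemma energy_norm_sq: "w \<in> V \<Longrightarrow> (energy_norm w)\<^sup>2 = ba w w"
  unfolding energy_norm_def
  by (rule real_sqrt_pow2[OF orthonormal_basis_nonneg[OF energy_basis fn_subspace_Vh ba_bilinear]])

lemma energy_norm_pos: "w \<in> V \<Longrightarrow> w \<noteq> (\<lambda>x. 0) \<Longrightarrow> energy_norm w > 0"
  using ba_pos_def by (simp add: energy_norm_def pos_def_on_def)

text \<open>Equivalence constants between the energy norm and the quantities appearing in the
  estimates; finite because \<open>V\<close> is finite-dimensional.\<close>

definition robin_const where
  "robin_const = (\<Sum>e\<in>energy_basis. \<Sum>e'\<in>energy_basis. bint \<Omega> (\<lambda>x. \<bar>e x * e' x\<bar>))"
definition mass_const where
  "mass_const = (\<Sum>e\<in>energy_basis. \<Sum>e'\<in>energy_basis. \<bar>mass \<omega> e e'\<bar>)"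
definition H1_const where
  "H1_const = (\<Sum>e\<in>energy_basis. \<Sum>e'\<in>energy_basis. \<bar>mass \<Omega> e e' + stiffness e e'\<bar>)"
definition load_const where
  "load_const = (\<Sum>e\<in>energy_basis. \<bar>lform \<Omega> f g e\<bar>)"
definition q_load_const where
  "q_load_const = (\<Sum>e\<in>energy_basis. \<bar>q_load e\<bar>)"

lemma consts_nonneg: "robin_const \<ge> 0" "mass_const \<ge> 0" "H1_const \<ge> 0" "load_const \<ge> 0" "q_load_const \<ge> 0"
proof -
  have "bint \<Omega> (\<lambda>x. \<bar>e x * e' x\<bar>) \<ge> 0" if "e \<in> V" "e' \<in> V" for e e'
    using that Vh_edgewise_continuous
    by (intro bint_nonneg edgewise_continuous_imp_integrable edgewise_continuous_abs edgewise_continuous_mult) auto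
  then show "robin_const \<ge> 0" using energy_basis_subset by (auto simp: robin_const_def intro!: sum_nonneg)
qed (auto simp: mass_const_def H1_const_def load_const_def q_load_const_def intro!: sum_nonneg)

lemma robin_le:
  assumes "edgewise_continuous \<eta>" "\<And>x. x \<in> frontier \<Omega> \<Longrightarrow> \<bar>\<eta> x\<bar> \<le> s" "u \<in> V" "v \<in> V"
  shows "\<bar>robin \<eta> u v\<bar> \<le> s * robin_const * energy_norm u * energy_norm v"
proof -
  have "\<bar>robin \<eta> u v\<bar>
      \<le> (\<Sum>e\<in>energy_basis. \<Sum>e'\<in>energy_basis. \<bar>robin \<eta> e e'\<bar>) * energy_norm u * energy_norm v"
    unfolding energy_norm_def
    by (rule bilinear_on_bounded[OF energy_basis fn_subspace_Vh ba_bilinear robin_bilinear[OF assms(1)] assms(3,4)])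
  also have "\<dots> \<le> (s * robin_const) * energy_norm u * energy_norm v"
  proof (intro mult_right_mono energy_norm_nonneg assms(3,4))
    have "(\<Sum>e\<in>energy_basis. \<Sum>e'\<in>energy_basis. \<bar>robin \<eta> e e'\<bar>)
        \<le> (\<Sum>e\<in>energy_basis. \<Sum>e'\<in>energy_basis. s * bint \<Omega> (\<lambda>x. \<bar>e x * e' x\<bar>))"
      using robin_bound[OF assms(1,2)] energy_basis_subset by (intro sum_mono) auto
    then show "(\<Sum>e\<in>energy_basis. \<Sum>e'\<in>energy_basis. \<bar>robin \<eta> e e'\<bar>) \<le> s * robin_const"
      by (simp add: robin_const_def sum_distrib_left)
  qed
  finally show ?thesis .
qed

lemma mass_le: "u \<in> V \<Longrightarrow> v \<in> V \<Longrightarrow> \<bar>mass \<omega> u v\<bar> \<le> mass_const * energy_norm u * energy_norm v"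
  unfolding energy_norm_def mass_const_def
  by (rule bilinear_on_bounded[OF energy_basis fn_subspace_Vh ba_bilinear mass_obs_bilinear])

lemma lform_le: "v \<in> V \<Longrightarrow> \<bar>lform \<Omega> f g v\<bar> \<le> load_const * energy_norm v"
  unfolding energy_norm_def load_const_def
  by (rule linear_on_bounded[OF energy_basis fn_subspace_Vh ba_bilinear lform_linear])

lemma q_load_le: "v \<in> V \<Longrightarrow> \<bar>q_load v\<bar> \<le> q_load_const * energy_norm v"
  unfolding energy_norm_def q_load_const_def
  by (rule linear_on_bounded[OF energy_basis fn_subspace_Vh ba_bilinear q_load_linear])

lemma H1_norm_le:
  assumes w: "w \<in> V"
  shows "H1_norm \<Omega> w \<le> sqrt H1_const * energy_norm w"
proof -
  have "mass \<Omega> w w + stiffness w w \<le> H1_const * energy_norm w * energy_norm w"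
    unfolding energy_norm_def H1_const_def
    using bilinear_on_bounded[OF energy_basis fn_subspace_Vh ba_bilinear
        bilinear_on_add[OF mass_bilinear[OF open_domain order_refl] stiffness_bilinear] w w]
    by simp
  then have "H1_norm \<Omega> w \<le> sqrt (H1_const * energy_norm w * energy_norm w)"
    by (simp add: H1_norm_eq[OF w])
  also have "\<dots> = sqrt H1_const * energy_norm w" by (simp add: real_sqrt_mult energy_norm_nonneg[OF w])
  finally show ?thesis .
qed

text \<open>The basic a priori estimate: testing the equation with the solution itself.\<close>

lemma energy_norm_le_of_coercive:
  assumes "w \<in> V" "\<beta> w w = L w" "\<kappa> * (energy_norm w)\<^sup>2 \<le> \<beta> w w" "\<kappa> > 0"
    and "\<bar>L w\<bar> \<le> C * energy_norm w" "C \<ge> 0"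
  shows "energy_norm w \<le> C / \<kappa>"
proof (cases "energy_norm w = 0")
  case False
  then have "energy_norm w > 0" using energy_norm_nonneg[OF assms(1)] by simp
  moreover have "\<kappa> * energy_norm w * energy_norm w \<le> C * energy_norm w"
    using assms by (simp add: power2_eq_square mult_ac)
  ultimately show ?thesis using assms(4) by (simp add: field_simps)
qed (use assms in simp)

end

section \<open>Perturbations of the Robin coefficient\<close>

context robin_problem
begin

definition u_bound where "u_bound = 2 * load_const"
definition z_bound where "z_bound = 2 * (mass_const * u_bound + q_load_const)"

lemma bounds_nonneg: "u_bound \<ge> 0" "z_bound \<ge> 0"
  using consts_nonneg by (simp_all add: u_bound_def z_bound_def)

lemma bform_shift:
  assumes "edgewise_continuous \<eta>1" "edgewise_continuous \<eta>2" "u \<in> V" "v \<in> V"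
  shows "bform \<Omega> (\<lambda>x. a x + \<eta>1 x) u v = bform \<Omega> (\<lambda>x. a x + \<eta>2 x) u v + robin (\<lambda>x. \<eta>1 x - \<eta>2 x) u v"
proof -
  have "(\<lambda>x. a x + \<eta>1 x) = (\<lambda>x. (a x + \<eta>2 x) + (\<eta>1 x - \<eta>2 x))" by auto
  then show ?thesis
    using bform_add_coeff[OF edgewise_continuous_add[OF a_edgewise_continuous assms(2)]
        edgewise_continuous_diff[OF assms(1,2)] assms(3,4)] by simp
qed

end

locale robin_perturbation = robin_problem \<Omega> T \<omega> f g q a a0 for \<Omega> T \<omega> f g q a a0 +
  fixes \<eta> :: "real^2 \<Rightarrow> real" and s :: real
  assumes edgewise_continuous_\<eta>: "edgewise_continuous \<eta>"
    and \<eta>_le: "\<And>x. x \<in> frontier \<Omega> \<Longrightarrow> \<bar>\<eta> x\<bar> \<le> s"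
    and small: "s * robin_const \<le> 1 / 2"
begin

abbreviation \<alpha> where "\<alpha> \<equiv> \<lambda>x. a x + \<eta> x"

lemma edgewise_continuous_\<alpha>: "edgewise_continuous \<alpha>"
  by (rule edgewise_continuous_add[OF a_edgewise_continuous edgewise_continuous_\<eta>])

lemma bform_\<alpha>_coercive:
  assumes w: "w \<in> V"
  shows "1 / 2 * (energy_norm w)\<^sup>2 \<le> bform \<Omega> \<alpha> w w"
proof -
  have "bform \<Omega> \<alpha> w w = ba w w + robin \<eta> w w"
    using bform_shift[of \<eta> "\<lambda>x. 0", OF edgewise_continuous_\<eta> edgewise_continuous_const w w] by simp
  moreover have "\<bar>robin \<eta> w w\<bar> \<le> s * robin_const * energy_norm w * energy_norm w"
    by (rule robin_le[OF edgewise_continuous_\<eta> \<eta>_le w w])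
  moreover have "s * robin_const * (energy_norm w * energy_norm w) \<le> 1 / 2 * (energy_norm w * energy_norm w)"
    using small by (rule mult_right_mono) simp
  ultimately show ?thesis using energy_norm_sq[OF w] by (simp add: power2_eq_square mult_ac)
qed

lemma bform_\<alpha>_pos_def: "pos_def_on V (bform \<Omega> \<alpha>)"
  unfolding pos_def_on_def
proof (intro ballI impI)
  fix w assume "w \<in> V" "w \<noteq> (\<lambda>x. 0)"
  then have "energy_norm w > 0" by (rule energy_norm_pos)
  then have "(energy_norm w)\<^sup>2 > 0" by simp
  then show "bform \<Omega> \<alpha> w w > 0" using bform_\<alpha>_coercive[OF \<open>w \<in> V\<close>] by linarith
qed

lemma u_eq_unique: "\<exists>!u. u_eq T \<Omega> f g \<alpha> u"
  unfolding u_eq_def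
  by (rule bform_unique_solution[OF edgewise_continuous_\<alpha> bform_\<alpha>_pos_def lform_linear])

lemma uh_\<alpha>: "uh T \<Omega> f g \<alpha> \<in> V" "v \<in> V \<Longrightarrow> bform \<Omega> \<alpha> (uh T \<Omega> f g \<alpha>) v = lform \<Omega> f g v"
  using theI'[OF u_eq_unique] unfolding uh_def u_eq_def by auto

lemma uh_\<alpha>_bound: "energy_norm (uh T \<Omega> f g \<alpha>) \<le> u_bound"
proof -
  have "energy_norm (uh T \<Omega> f g \<alpha>) \<le> load_const / (1 / 2)"
    by (rule energy_norm_le_of_coercive[where \<beta>="bform \<Omega> \<alpha>" and L="lform \<Omega> f g", OF uh_\<alpha>(1) uh_\<alpha>(2)[OF uh_\<alpha>(1)] bform_\<alpha>_coercive[OF uh_\<alpha>(1)]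
          _ lform_le[OF uh_\<alpha>(1)] consts_nonneg(4)]) simp
  then show ?thesis by (simp add: u_bound_def)
qed

lemma z_eq_unique: "\<exists>!z. z_eq T \<Omega> \<omega> f g q \<alpha> z"
  unfolding z_eq_def
  by (rule bform_unique_solution[OF edgewise_continuous_\<alpha> bform_\<alpha>_pos_def adjoint_load_linear[OF uh_\<alpha>(1)]])

lemma zh_\<alpha>: "zh T \<Omega> \<omega> f g q \<alpha> \<in> V"
  "v \<in> V \<Longrightarrow> bform \<Omega> \<alpha> (zh T \<Omega> \<omega> f g q \<alpha>) v = mass \<omega> (uh T \<Omega> f g \<alpha>) v - q_load v"
  using theI'[OF z_eq_unique] adjoint_load_eq[OF uh_\<alpha>(1)] unfolding zh_def z_eq_def by auto

lemma zh_\<alpha>_bound: "energy_norm (zh T \<Omega> \<omega> f g q \<alpha>) \<le> z_bound"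
proof -
  let ?Z = "zh T \<Omega> \<omega> f g q \<alpha>"
  have "\<bar>mass \<omega> (uh T \<Omega> f g \<alpha>) ?Z\<bar> \<le> mass_const * u_bound * energy_norm ?Z"
    using mass_le[OF uh_\<alpha>(1) zh_\<alpha>(1)] uh_\<alpha>_bound consts_nonneg(2) energy_norm_nonneg[OF zh_\<alpha>(1)]
    by (meson mult_left_mono mult_right_mono order_trans)
  then have "\<bar>mass \<omega> (uh T \<Omega> f g \<alpha>) ?Z - q_load ?Z\<bar> \<le> (mass_const * u_bound + q_load_const) * energy_norm ?Z"
    using q_load_le[OF zh_\<alpha>(1)] by (simp add: distrib_right abs_triangle_ineq4[THEN order_trans])
  then have "energy_norm ?Z \<le> (mass_const * u_bound + q_load_const) / (1 / 2)"
    using consts_nonneg bounds_nonneg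
    by (intro energy_norm_le_of_coercive[where \<beta>="bform \<Omega> \<alpha>"
          and L="\<lambda>v. mass \<omega> (uh T \<Omega> f g \<alpha>) v - q_load v", OF zh_\<alpha>(1) zh_\<alpha>(2)[OF zh_\<alpha>(1)] bform_\<alpha>_coercive[OF zh_\<alpha>(1)]]) auto
  then show ?thesis by (simp add: z_bound_def)
qed

lemma ba_uh_\<alpha>: "v \<in> V \<Longrightarrow> ba (uh T \<Omega> f g \<alpha>) v = lform \<Omega> f g v - robin \<eta> (uh T \<Omega> f g \<alpha>) v"
  using bform_shift[of \<eta> "\<lambda>x. 0", OF edgewise_continuous_\<eta> edgewise_continuous_const uh_\<alpha>(1)] uh_\<alpha>(2)
  by simp

lemma ba_zh_\<alpha>: "v \<in> V \<Longrightarrow>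
    ba (zh T \<Omega> \<omega> f g q \<alpha>) v = mass \<omega> (uh T \<Omega> f g \<alpha>) v - q_load v - robin \<eta> (zh T \<Omega> \<omega> f g q \<alpha>) v"
  using bform_shift[of \<eta> "\<lambda>x. 0", OF edgewise_continuous_\<eta> edgewise_continuous_const zh_\<alpha>(1)] zh_\<alpha>(2)
  by simp

lemma disc_well_defined_\<alpha>: "disc_well_defined T \<Omega> \<omega> f g q \<alpha>"
  unfolding disc_well_defined_def using u_eq_unique z_eq_unique by blast

end

context robin_problem
begin

lemma robin_perturbationI:
  assumes "edgewise_continuous \<eta>" "\<And>x. x \<in> frontier \<Omega> \<Longrightarrow> \<bar>\<eta> x\<bar> \<le> s" "s * robin_const \<le> 1 / 2"
  shows "robin_perturbation \<Omega> T \<omega> f g q a a0 \<eta> s"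
  by (rule robin_perturbation.intro, unfold_locales) (use assms in auto)

lemma bform_diff_shift:
  assumes "edgewise_continuous \<eta>1" "edgewise_continuous \<eta>2" "X1 \<in> V" "X2 \<in> V" "v \<in> V"
  shows "bform \<Omega> (\<lambda>x. a x + \<eta>1 x) (\<lambda>x. X1 x - X2 x) v
    = bform \<Omega> (\<lambda>x. a x + \<eta>1 x) X1 v - bform \<Omega> (\<lambda>x. a x + \<eta>2 x) X2 v - robin (\<lambda>x. \<eta>1 x - \<eta>2 x) X2 v"
  using linear_on_diff[OF bilinear_on_left[OF bform_bilinear[OF edgewise_continuous_add[OF a_edgewise_continuous
        assms(1)]] assms(5)] fn_subspace_Vh assms(3,4)] bform_shift[OF assms(1,2,4,5)]
  by simp

lemma uh_lipschitz:
  assumes P1: "robin_perturbation \<Omega> T \<omega> f g q a a0 \<eta>1 s1"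
    and P2: "robin_perturbation \<Omega> T \<omega> f g q a a0 \<eta>2 s2"
    and d: "\<And>x. x \<in> frontier \<Omega> \<Longrightarrow> \<bar>\<eta>1 x - \<eta>2 x\<bar> \<le> \<delta>" "\<delta> \<ge> 0"
  shows "energy_norm (\<lambda>x. uh T \<Omega> f g (\<lambda>x. a x + \<eta>1 x) x - uh T \<Omega> f g (\<lambda>x. a x + \<eta>2 x) x)
    \<le> 2 * \<delta> * robin_const * u_bound"
proof -
  interpret P1: robin_perturbation \<Omega> T \<omega> f g q a a0 \<eta>1 s1 by (rule P1)
  interpret P2: robin_perturbation \<Omega> T \<omega> f g q a a0 \<eta>2 s2 by (rule P2)
  define e where "e = (\<lambda>x. uh T \<Omega> f g P1.\<alpha> x - uh T \<Omega> f g P2.\<alpha> x)"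
  have eV: "e \<in> V" unfolding e_def by (rule fn_subspace_diff[OF fn_subspace_Vh P1.uh_\<alpha>(1) P2.uh_\<alpha>(1)])
  have eq: "bform \<Omega> P1.\<alpha> e e = - robin (\<lambda>x. \<eta>1 x - \<eta>2 x) (uh T \<Omega> f g P2.\<alpha>) e"
    unfolding e_def
    using bform_diff_shift[OF P1.edgewise_continuous_\<eta> P2.edgewise_continuous_\<eta> P1.uh_\<alpha>(1) P2.uh_\<alpha>(1) eV]
      P1.uh_\<alpha>(2)[OF eV] P2.uh_\<alpha>(2)[OF eV] by (simp add: e_def)
  have "\<bar>robin (\<lambda>x. \<eta>1 x - \<eta>2 x) (uh T \<Omega> f g P2.\<alpha>) e\<bar>
      \<le> \<delta> * robin_const * energy_norm (uh T \<Omega> f g P2.\<alpha>) * energy_norm e"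
    by (rule robin_le[OF edgewise_continuous_diff[OF P1.edgewise_continuous_\<eta> P2.edgewise_continuous_\<eta>]
          d(1) P2.uh_\<alpha>(1) eV])
  also have "\<dots> \<le> \<delta> * robin_const * u_bound * energy_norm e"
    using P2.uh_\<alpha>_bound d(2) consts_nonneg(1) energy_norm_nonneg[OF eV]
    by (intro mult_right_mono mult_left_mono) auto
  finally have "energy_norm e \<le> (\<delta> * robin_const * u_bound) / (1 / 2)"
    using d(2) consts_nonneg(1) bounds_nonneg(1)
    by (intro energy_norm_le_of_coercive[where \<beta>="bform \<Omega> P1.\<alpha>"
          and L="\<lambda>v. - robin (\<lambda>x. \<eta>1 x - \<eta>2 x) (uh T \<Omega> f g P2.\<alpha>) v", OF eV eq
          P1.bform_\<alpha>_coercive[OF eV]]) auto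
  then show ?thesis by (simp add: e_def)
qed

definition lipschitz_const where
  "lipschitz_const = 2 * robin_const * (2 * mass_const * u_bound + z_bound)"

lemma zh_lipschitz:
  assumes P1: "robin_perturbation \<Omega> T \<omega> f g q a a0 \<eta>1 s1"
    and P2: "robin_perturbation \<Omega> T \<omega> f g q a a0 \<eta>2 s2"
    and d: "\<And>x. x \<in> frontier \<Omega> \<Longrightarrow> \<bar>\<eta>1 x - \<eta>2 x\<bar> \<le> \<delta>" "\<delta> \<ge> 0"
  shows "energy_norm (\<lambda>x. zh T \<Omega> \<omega> f g q (\<lambda>x. a x + \<eta>1 x) x - zh T \<Omega> \<omega> f g q (\<lambda>x. a x + \<eta>2 x) x)
    \<le> \<delta> * lipschitz_const"
proof -
  interpret P1: robin_perturbation \<Omega> T \<omega> f g q a a0 \<eta>1 s1 by (rule P1)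
  interpret P2: robin_perturbation \<Omega> T \<omega> f g q a a0 \<eta>2 s2 by (rule P2)
  define e where "e = (\<lambda>x. uh T \<Omega> f g P1.\<alpha> x - uh T \<Omega> f g P2.\<alpha> x)"
  define e' where "e' = (\<lambda>x. zh T \<Omega> \<omega> f g q P1.\<alpha> x - zh T \<Omega> \<omega> f g q P2.\<alpha> x)"
  have eV: "e \<in> V" unfolding e_def by (rule fn_subspace_diff[OF fn_subspace_Vh P1.uh_\<alpha>(1) P2.uh_\<alpha>(1)])
  have e'V: "e' \<in> V" unfolding e'_def by (rule fn_subspace_diff[OF fn_subspace_Vh P1.zh_\<alpha>(1) P2.zh_\<alpha>(1)])
  have ne: "energy_norm e \<le> 2 * \<delta> * robin_const * u_bound"
    unfolding e_def by (rule uh_lipschitz[OF P1 P2 d])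
  have eq: "bform \<Omega> P1.\<alpha> e' e' = mass \<omega> e e' - robin (\<lambda>x. \<eta>1 x - \<eta>2 x) (zh T \<Omega> \<omega> f g q P2.\<alpha>) e'"
    using bform_diff_shift[OF P1.edgewise_continuous_\<eta> P2.edgewise_continuous_\<eta> P1.zh_\<alpha>(1) P2.zh_\<alpha>(1) e'V]
      P1.zh_\<alpha>(2)[OF e'V] P2.zh_\<alpha>(2)[OF e'V]
      linear_on_diff[OF bilinear_on_left[OF mass_obs_bilinear e'V] fn_subspace_Vh P1.uh_\<alpha>(1) P2.uh_\<alpha>(1)]
    by (simp add: e_def e'_def)
  have "\<bar>mass \<omega> e e'\<bar> \<le> mass_const * energy_norm e * energy_norm e'" by (rule mass_le[OF eV e'V])
  moreover have "\<bar>robin (\<lambda>x. \<eta>1 x - \<eta>2 x) (zh T \<Omega> \<omega> f g q P2.\<alpha>) e'\<bar>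
      \<le> \<delta> * robin_const * energy_norm (zh T \<Omega> \<omega> f g q P2.\<alpha>) * energy_norm e'"
    by (rule robin_le[OF edgewise_continuous_diff[OF P1.edgewise_continuous_\<eta> P2.edgewise_continuous_\<eta>]
          d(1) P2.zh_\<alpha>(1) e'V])
  moreover have "\<delta> * robin_const * energy_norm (zh T \<Omega> \<omega> f g q P2.\<alpha>) * energy_norm e'
      \<le> \<delta> * robin_const * z_bound * energy_norm e'"
    using P2.zh_\<alpha>_bound d(2) consts_nonneg(1) energy_norm_nonneg[OF e'V]
    by (intro mult_right_mono mult_left_mono) auto
  ultimately have "\<bar>mass \<omega> e e' - robin (\<lambda>x. \<eta>1 x - \<eta>2 x) (zh T \<Omega> \<omega> f g q P2.\<alpha>) e'\<bar>
      \<le> (mass_const * energy_norm e + \<delta> * robin_const * z_bound) * energy_norm e'"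
    by (simp add: distrib_right abs_triangle_ineq4[THEN order_trans])
  then have "energy_norm e' \<le> (mass_const * energy_norm e + \<delta> * robin_const * z_bound) / (1 / 2)"
    using d(2) consts_nonneg bounds_nonneg energy_norm_nonneg[OF eV]
    by (intro energy_norm_le_of_coercive[where \<beta>="bform \<Omega> P1.\<alpha>"
          and L="\<lambda>v. mass \<omega> e v - robin (\<lambda>x. \<eta>1 x - \<eta>2 x) (zh T \<Omega> \<omega> f g q P2.\<alpha>) v", OF e'V eq
          P1.bform_\<alpha>_coercive[OF e'V]]) auto
  also have "\<dots> \<le> 2 * (mass_const * (2 * \<delta> * robin_const * u_bound) + \<delta> * robin_const * z_bound)"
    using mult_left_mono[OF ne consts_nonneg(2)] by (simp add: mult_ac)
  also have "\<dots> = \<delta> * lipschitz_const" by (simp add: lipschitz_const_def algebra_simps)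
  finally show ?thesis by (simp add: e'_def)
qed

lemma zero_perturbation: "robin_perturbation \<Omega> T \<omega> f g q a a0 (\<lambda>x. 0) 0"
  by (rule robin_perturbationI[OF edgewise_continuous_const]) simp_all

abbreviation U0 where "U0 \<equiv> uh T \<Omega> f g a"
abbreviation Z0 where "Z0 \<equiv> zh T \<Omega> \<omega> f g q a"

lemma U0: "U0 \<in> V" "v \<in> V \<Longrightarrow> ba U0 v = lform \<Omega> f g v" "energy_norm U0 \<le> u_bound"
  using robin_perturbation.uh_\<alpha>[OF zero_perturbation] robin_perturbation.uh_\<alpha>_bound[OF zero_perturbation]
  by simp_all

lemma Z0: "Z0 \<in> V" "v \<in> V \<Longrightarrow> ba Z0 v = mass \<omega> U0 v - q_load v" "energy_norm Z0 \<le> z_bound"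
  using robin_perturbation.zh_\<alpha>[OF zero_perturbation] robin_perturbation.zh_\<alpha>_bound[OF zero_perturbation]
  by simp_all

lemma ba_coercive: "w \<in> V \<Longrightarrow> 1 * (energy_norm w)\<^sup>2 \<le> ba w w"
  by (simp add: energy_norm_sq)

lemma ba_unique: "w \<in> V \<Longrightarrow> w' \<in> V \<Longrightarrow> (\<And>v. v \<in> V \<Longrightarrow> ba w v = ba w' v) \<Longrightarrow> w = w'"
  using pos_def_on_unique[OF fn_subspace_Vh ba_bilinear ba_pos_def] by blast

abbreviation Ud where "Ud \<eta> \<equiv> udot T \<Omega> f g a \<eta>"
abbreviation Zd where "Zd \<eta> \<equiv> zdot T \<Omega> \<omega> f g q a \<eta>"

lemma udot_eq_unique: "edgewise_continuous \<eta> \<Longrightarrow> \<exists>!w. udot_eq T \<Omega> f g a \<eta> w"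
  unfolding udot_eq_def robin_def[symmetric]
  by (rule bform_unique_solution[OF a_edgewise_continuous ba_pos_def
        linear_on_minus[OF bilinear_on_right[OF robin_bilinear U0(1)]]])

lemma udot:
  assumes "edgewise_continuous \<eta>"
  shows "Ud \<eta> \<in> V" "v \<in> V \<Longrightarrow> ba (Ud \<eta>) v = - robin \<eta> U0 v"
  using theI'[OF udot_eq_unique[OF assms]] unfolding udot_def udot_eq_def robin_def by auto

lemma zdot_eq_unique: "edgewise_continuous \<eta> \<Longrightarrow> \<exists>!w. zdot_eq T \<Omega> \<omega> f g q a \<eta> w"
  unfolding zdot_eq_def robin_def[symmetric] mass_def[symmetric]
  by (rule bform_unique_solution[OF a_edgewise_continuous ba_pos_def
        linear_on_diff_fun[OF bilinear_on_right[OF mass_obs_bilinear udot(1)]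
          bilinear_on_right[OF robin_bilinear Z0(1)]]])

lemma zdot:
  assumes "edgewise_continuous \<eta>"
  shows "Zd \<eta> \<in> V" "v \<in> V \<Longrightarrow> ba (Zd \<eta>) v = mass \<omega> (Ud \<eta>) v - robin \<eta> Z0 v"
  using theI'[OF zdot_eq_unique[OF assms]] unfolding zdot_def zdot_eq_def robin_def mass_def by auto

lemma udot_bound:
  assumes \<eta>: "edgewise_continuous \<eta>" "\<And>x. x \<in> frontier \<Omega> \<Longrightarrow> \<bar>\<eta> x\<bar> \<le> s" and s: "s \<ge> 0"
  shows "energy_norm (Ud \<eta>) \<le> s * robin_const * u_bound"
proof -
  have "\<bar>robin \<eta> U0 (Ud \<eta>)\<bar> \<le> s * robin_const * energy_norm U0 * energy_norm (Ud \<eta>)"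
    by (rule robin_le[OF \<eta> U0(1) udot(1)[OF \<eta>(1)]])
  also have "\<dots> \<le> s * robin_const * u_bound * energy_norm (Ud \<eta>)"
    using U0(3) s consts_nonneg(1) energy_norm_nonneg[OF udot(1)[OF \<eta>(1)]]
    by (intro mult_right_mono mult_left_mono) auto
  finally have "energy_norm (Ud \<eta>) \<le> (s * robin_const * u_bound) / 1"
    using s consts_nonneg bounds_nonneg
    by (intro energy_norm_le_of_coercive[where \<beta>=ba and L="\<lambda>v. - robin \<eta> U0 v", OF udot(1)[OF \<eta>(1)]
          udot(2)[OF \<eta>(1) udot(1)[OF \<eta>(1)]] ba_coercive[OF udot(1)[OF \<eta>(1)]]]) auto
  then show ?thesis by simp
qed

lemma zdot_bound:
  assumes \<eta>: "edgewise_continuous \<eta>" "\<And>x. x \<in> frontier \<Omega> \<Longrightarrow> \<bar>\<eta> x\<bar> \<le> s" and s: "s \<ge> 0"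
  shows "energy_norm (Zd \<eta>) \<le> s * (mass_const * robin_const * u_bound + robin_const * z_bound)"
proof -
  note ud = udot[OF \<eta>(1)] and zd = zdot[OF \<eta>(1)]
  have "\<bar>mass \<omega> (Ud \<eta>) (Zd \<eta>)\<bar> \<le> mass_const * (s * robin_const * u_bound) * energy_norm (Zd \<eta>)"
    using mass_le[OF ud(1) zd(1)] udot_bound[OF \<eta> s] consts_nonneg(2) energy_norm_nonneg[OF zd(1)]
    by (meson mult_left_mono mult_right_mono order_trans)
  moreover have "\<bar>robin \<eta> Z0 (Zd \<eta>)\<bar> \<le> s * robin_const * z_bound * energy_norm (Zd \<eta>)"
    using robin_le[OF \<eta> Z0(1) zd(1)] Z0(3) s consts_nonneg(1) energy_norm_nonneg[OF zd(1)]
    by (meson mult_left_mono mult_right_mono order_trans zero_le_mult_iff)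
  ultimately have "\<bar>mass \<omega> (Ud \<eta>) (Zd \<eta>) - robin \<eta> Z0 (Zd \<eta>)\<bar>
      \<le> s * (mass_const * robin_const * u_bound + robin_const * z_bound) * energy_norm (Zd \<eta>)"
    by (simp add: algebra_simps abs_triangle_ineq4[THEN order_trans])
  then have "energy_norm (Zd \<eta>) \<le> s * (mass_const * robin_const * u_bound + robin_const * z_bound) / 1"
    using s consts_nonneg bounds_nonneg
    by (intro energy_norm_le_of_coercive[where \<beta>=ba and L="\<lambda>v. mass \<omega> (Ud \<eta>) v - robin \<eta> Z0 v", OF zd(1)
          zd(2)[OF zd(1)] ba_coercive[OF zd(1)]]) auto
  then show ?thesis by simp
qed

lemma udot_add:
  assumes "edgewise_continuous \<eta>1" "edgewise_continuous \<eta>2"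
  shows "Ud (\<lambda>x. \<eta>1 x + \<eta>2 x) = (\<lambda>x. Ud \<eta>1 x + Ud \<eta>2 x)"
proof (rule ba_unique)
  note u1 = udot[OF assms(1)] and u2 = udot[OF assms(2)] and u = udot[OF edgewise_continuous_add[OF assms]]
  show "Ud (\<lambda>x. \<eta>1 x + \<eta>2 x) \<in> V" "(\<lambda>x. Ud \<eta>1 x + Ud \<eta>2 x) \<in> V"
    using u(1) fn_subspace_add[OF fn_subspace_Vh u1(1) u2(1)] .
  fix v assume v: "v \<in> V"
  show "ba (Ud (\<lambda>x. \<eta>1 x + \<eta>2 x)) v = ba (\<lambda>x. Ud \<eta>1 x + Ud \<eta>2 x) v"
    using u(2)[OF v] u1(2)[OF v] u2(2)[OF v] robin_add_coeff[OF assms U0(1) v]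
      linear_on_add[OF bilinear_on_left[OF ba_bilinear v] u1(1) u2(1)] by simp
qed

lemma udot_scale:
  assumes "edgewise_continuous \<eta>"
  shows "Ud (\<lambda>x. c * \<eta> x) = (\<lambda>x. c * Ud \<eta> x)"
proof (rule ba_unique)
  note u1 = udot[OF assms] and u = udot[OF edgewise_continuous_mult[OF edgewise_continuous_const assms]]
  show "Ud (\<lambda>x. c * \<eta> x) \<in> V" "(\<lambda>x. c * Ud \<eta> x) \<in> V"
    using u(1) fn_subspace_scale[OF fn_subspace_Vh u1(1)] .
  fix v assume v: "v \<in> V"
  show "ba (Ud (\<lambda>x. c * \<eta> x)) v = ba (\<lambda>x. c * Ud \<eta> x) v"
    using u(2)[OF v] u1(2)[OF v] robin_scale_coeff linear_on_scale[OF bilinear_on_left[OF ba_bilinear v] u1(1)]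
    by simp
qed

lemma zdot_add:
  assumes "edgewise_continuous \<eta>1" "edgewise_continuous \<eta>2"
  shows "Zd (\<lambda>x. \<eta>1 x + \<eta>2 x) = (\<lambda>x. Zd \<eta>1 x + Zd \<eta>2 x)"
proof (rule ba_unique)
  note u1 = udot[OF assms(1)] and u2 = udot[OF assms(2)]
  note z1 = zdot[OF assms(1)] and z2 = zdot[OF assms(2)] and z = zdot[OF edgewise_continuous_add[OF assms]]
  show "Zd (\<lambda>x. \<eta>1 x + \<eta>2 x) \<in> V" "(\<lambda>x. Zd \<eta>1 x + Zd \<eta>2 x) \<in> V"
    using z(1) fn_subspace_add[OF fn_subspace_Vh z1(1) z2(1)] .
  fix v assume v: "v \<in> V"
  show "ba (Zd (\<lambda>x. \<eta>1 x + \<eta>2 x)) v = ba (\<lambda>x. Zd \<eta>1 x + Zd \<eta>2 x) v"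
    using z(2)[OF v] z1(2)[OF v] z2(2)[OF v] robin_add_coeff[OF assms Z0(1) v] udot_add[OF assms]
      linear_on_add[OF bilinear_on_left[OF ba_bilinear v] z1(1) z2(1)]
      linear_on_add[OF bilinear_on_left[OF mass_obs_bilinear v] u1(1) u2(1)] by simp
qed

lemma zdot_scale:
  assumes "edgewise_continuous \<eta>"
  shows "Zd (\<lambda>x. c * \<eta> x) = (\<lambda>x. c * Zd \<eta> x)"
proof (rule ba_unique)
  note u1 = udot[OF assms] and z1 = zdot[OF assms]
  note z = zdot[OF edgewise_continuous_mult[OF edgewise_continuous_const assms]]
  show "Zd (\<lambda>x. c * \<eta> x) \<in> V" "(\<lambda>x. c * Zd \<eta> x) \<in> V"
    using z(1) fn_subspace_scale[OF fn_subspace_Vh z1(1)] .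
  fix v assume v: "v \<in> V"
  show "ba (Zd (\<lambda>x. c * \<eta> x)) v = ba (\<lambda>x. c * Zd \<eta> x) v"
    using z(2)[OF v] z1(2)[OF v] robin_scale_coeff udot_scale[OF assms]
      linear_on_scale[OF bilinear_on_left[OF ba_bilinear v] z1(1)]
      linear_on_scale[OF bilinear_on_left[OF mass_obs_bilinear v] u1(1)]
    by (simp add: right_diff_distrib)
qed

text \<open>The Frechet remainders solve the reference problem with right-hand sides that are
  products of two first-order differences, hence are of second order in the perturbation.\<close>

lemma udot_remainder_eq:
  assumes P: "robin_perturbation \<Omega> T \<omega> f g q a a0 \<eta> s" and v: "v \<in> V"
  shows "ba (\<lambda>x. uh T \<Omega> f g (\<lambda>x. a x + \<eta> x) x - U0 x - Ud \<eta> x) v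
    = - robin \<eta> (\<lambda>x. uh T \<Omega> f g (\<lambda>x. a x + \<eta> x) x - U0 x) v"
proof -
  interpret P: robin_perturbation \<Omega> T \<omega> f g q a a0 \<eta> s by (rule P)
  note ud = udot[OF P.edgewise_continuous_\<eta>]
  have "ba (\<lambda>x. uh T \<Omega> f g P.\<alpha> x - U0 x - Ud \<eta> x) v = ba (uh T \<Omega> f g P.\<alpha>) v - ba U0 v - ba (Ud \<eta>) v"
    by (rule linear_on_diff3[OF bilinear_on_left[OF ba_bilinear v] fn_subspace_Vh P.uh_\<alpha>(1) U0(1) ud(1)])
  also have "\<dots> = - (robin \<eta> (uh T \<Omega> f g P.\<alpha>) v - robin \<eta> U0 v)"
    using P.ba_uh_\<alpha>[OF v] U0(2)[OF v] ud(2)[OF v] by simp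
  also have "\<dots> = - robin \<eta> (\<lambda>x. uh T \<Omega> f g P.\<alpha> x - U0 x) v"
    using linear_on_diff[OF bilinear_on_left[OF robin_bilinear[OF P.edgewise_continuous_\<eta>] v] fn_subspace_Vh
        P.uh_\<alpha>(1) U0(1)] by simp
  finally show ?thesis .
qed

lemma udot_remainder:
  assumes P: "robin_perturbation \<Omega> T \<omega> f g q a a0 \<eta> s" and s: "s \<ge> 0"
  shows "energy_norm (\<lambda>x. uh T \<Omega> f g (\<lambda>x. a x + \<eta> x) x - U0 x - Ud \<eta> x)
    \<le> s * robin_const * (2 * s * robin_const * u_bound)"
proof -
  interpret P: robin_perturbation \<Omega> T \<omega> f g q a a0 \<eta> s by (rule P)
  let ?U = "uh T \<Omega> f g P.\<alpha>"
  define du where "du = (\<lambda>x. ?U x - U0 x)"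
  define r where "r = (\<lambda>x. ?U x - U0 x - Ud \<eta> x)"
  note ud = udot[OF P.edgewise_continuous_\<eta>]
  have duV: "du \<in> V" unfolding du_def by (rule fn_subspace_diff[OF fn_subspace_Vh P.uh_\<alpha>(1) U0(1)])
  have rV: "r \<in> V" unfolding r_def by (rule fn_subspace_diff[OF fn_subspace_Vh duV[unfolded du_def] ud(1)])
  have "energy_norm (\<lambda>x. ?U x - uh T \<Omega> f g (\<lambda>x. a x + 0) x) \<le> 2 * s * robin_const * u_bound"
    by (rule uh_lipschitz[OF P zero_perturbation]) (simp_all add: P.\<eta>_le s)
  then have ndu: "energy_norm du \<le> 2 * s * robin_const * u_bound" by (simp add: du_def)
  have eq: "ba r r = - robin \<eta> du r" unfolding r_def du_def by (rule udot_remainder_eq[OF P rV[unfolded r_def]])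
  have "\<bar>robin \<eta> du r\<bar> \<le> s * robin_const * energy_norm du * energy_norm r"
    by (rule robin_le[OF P.edgewise_continuous_\<eta> P.\<eta>_le duV rV])
  also have "\<dots> \<le> s * robin_const * (2 * s * robin_const * u_bound) * energy_norm r"
    using s consts_nonneg(1) by (intro mult_right_mono[OF mult_left_mono[OF ndu]] energy_norm_nonneg[OF rV]) simp
  finally have "\<bar>- robin \<eta> du r\<bar> \<le> s * robin_const * (2 * s * robin_const * u_bound) * energy_norm r"
    by simp
  with eq have "energy_norm r \<le> s * robin_const * (2 * s * robin_const * u_bound) / 1"
    using s consts_nonneg bounds_nonneg
    by (intro energy_norm_le_of_coercive[where \<beta>=ba and L="\<lambda>v. - robin \<eta> du v", OF rV _ ba_coercive[OF rV]]) auto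
  then show ?thesis by (simp add: r_def)
qed

lemma zdot_remainder_eq:
  assumes P: "robin_perturbation \<Omega> T \<omega> f g q a a0 \<eta> s" and v: "v \<in> V"
  shows "ba (\<lambda>x. zh T \<Omega> \<omega> f g q (\<lambda>x. a x + \<eta> x) x - Z0 x - Zd \<eta> x) v
    = mass \<omega> (\<lambda>x. uh T \<Omega> f g (\<lambda>x. a x + \<eta> x) x - U0 x - Ud \<eta> x) v
      - robin \<eta> (\<lambda>x. zh T \<Omega> \<omega> f g q (\<lambda>x. a x + \<eta> x) x - Z0 x) v"
proof -
  interpret P: robin_perturbation \<Omega> T \<omega> f g q a a0 \<eta> s by (rule P)
  let ?U = "uh T \<Omega> f g P.\<alpha>" and ?Z = "zh T \<Omega> \<omega> f g q P.\<alpha>"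
  note ud = udot[OF P.edgewise_continuous_\<eta>] and zd = zdot[OF P.edgewise_continuous_\<eta>]
  have "ba (\<lambda>x. ?Z x - Z0 x - Zd \<eta> x) v = ba ?Z v - ba Z0 v - ba (Zd \<eta>) v"
    by (rule linear_on_diff3[OF bilinear_on_left[OF ba_bilinear v] fn_subspace_Vh P.zh_\<alpha>(1) Z0(1) zd(1)])
  also have "\<dots> = (mass \<omega> ?U v - mass \<omega> U0 v - mass \<omega> (Ud \<eta>) v) - (robin \<eta> ?Z v - robin \<eta> Z0 v)"
    using P.ba_zh_\<alpha>[OF v] Z0(2)[OF v] zd(2)[OF v] by simp
  also have "\<dots> = mass \<omega> (\<lambda>x. ?U x - U0 x - Ud \<eta> x) v - robin \<eta> (\<lambda>x. ?Z x - Z0 x) v"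
    using linear_on_diff3[OF bilinear_on_left[OF mass_obs_bilinear v] fn_subspace_Vh P.uh_\<alpha>(1) U0(1) ud(1)]
      linear_on_diff[OF bilinear_on_left[OF robin_bilinear[OF P.edgewise_continuous_\<eta>] v] fn_subspace_Vh
        P.zh_\<alpha>(1) Z0(1)] by simp
  finally show ?thesis .
qed

definition frechet_const where
  "frechet_const = mass_const * (2 * robin_const * robin_const * u_bound) + robin_const * lipschitz_const"

lemma zdot_remainder:
  assumes P: "robin_perturbation \<Omega> T \<omega> f g q a a0 \<eta> s" and s: "s \<ge> 0"
  shows "energy_norm (\<lambda>x. zh T \<Omega> \<omega> f g q (\<lambda>x. a x + \<eta> x) x - Z0 x - Zd \<eta> x) \<le> s * s * frechet_const"
proof -
  interpret P: robin_perturbation \<Omega> T \<omega> f g q a a0 \<eta> s by (rule P)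
  let ?U = "uh T \<Omega> f g P.\<alpha>" and ?Z = "zh T \<Omega> \<omega> f g q P.\<alpha>"
  define ru where "ru = (\<lambda>x. ?U x - U0 x - Ud \<eta> x)"
  define dz where "dz = (\<lambda>x. ?Z x - Z0 x)"
  define r where "r = (\<lambda>x. ?Z x - Z0 x - Zd \<eta> x)"
  note ud = udot[OF P.edgewise_continuous_\<eta>] and zd = zdot[OF P.edgewise_continuous_\<eta>]
  have ruV: "ru \<in> V" unfolding ru_def
    by (rule fn_subspace_diff[OF fn_subspace_Vh fn_subspace_diff[OF fn_subspace_Vh P.uh_\<alpha>(1) U0(1)] ud(1)])
  have dzV: "dz \<in> V" unfolding dz_def by (rule fn_subspace_diff[OF fn_subspace_Vh P.zh_\<alpha>(1) Z0(1)])
  have rV: "r \<in> V" unfolding r_def by (rule fn_subspace_diff[OF fn_subspace_Vh dzV[unfolded dz_def] zd(1)])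
  have nru: "energy_norm ru \<le> s * s * (2 * robin_const * robin_const * u_bound)"
    using udot_remainder[OF P s] by (simp add: ru_def mult_ac)
  have "energy_norm (\<lambda>x. ?Z x - zh T \<Omega> \<omega> f g q (\<lambda>x. a x + 0) x) \<le> s * lipschitz_const"
    by (rule zh_lipschitz[OF P zero_perturbation]) (simp_all add: P.\<eta>_le s)
  then have ndz: "energy_norm dz \<le> s * lipschitz_const" by (simp add: dz_def)
  have eq: "ba r r = mass \<omega> ru r - robin \<eta> dz r"
    unfolding r_def ru_def dz_def by (rule zdot_remainder_eq[OF P rV[unfolded r_def]])
  have "\<bar>mass \<omega> ru r\<bar> \<le> mass_const * energy_norm ru * energy_norm r" by (rule mass_le[OF ruV rV])
  also have "\<dots> \<le> mass_const * (s * s * (2 * robin_const * robin_const * u_bound)) * energy_norm r"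
    using consts_nonneg(2) by (intro mult_right_mono[OF mult_left_mono[OF nru]] energy_norm_nonneg[OF rV])
  finally have M: "\<bar>mass \<omega> ru r\<bar> \<le> mass_const * (s * s * (2 * robin_const * robin_const * u_bound)) * energy_norm r" .
  have "\<bar>robin \<eta> dz r\<bar> \<le> s * robin_const * energy_norm dz * energy_norm r"
    by (rule robin_le[OF P.edgewise_continuous_\<eta> P.\<eta>_le dzV rV])
  also have "\<dots> \<le> s * robin_const * (s * lipschitz_const) * energy_norm r"
    using s consts_nonneg(1) by (intro mult_right_mono[OF mult_left_mono[OF ndz]] energy_norm_nonneg[OF rV]) simp
  finally have R: "\<bar>robin \<eta> dz r\<bar> \<le> s * robin_const * (s * lipschitz_const) * energy_norm r" .
  have "\<bar>mass \<omega> ru r - robin \<eta> dz r\<bar> \<le> s * s * frechet_const * energy_norm r"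
    using abs_triangle_ineq4[of "mass \<omega> ru r" "robin \<eta> dz r"] M R
    by (simp add: frechet_const_def algebra_simps)
  moreover have "frechet_const \<ge> 0"
    using consts_nonneg bounds_nonneg by (simp add: frechet_const_def lipschitz_const_def)
  ultimately have "energy_norm r \<le> s * s * frechet_const / 1"
    by (intro energy_norm_le_of_coercive[where \<beta>=ba and L="\<lambda>v. mass \<omega> ru v - robin \<eta> dz v", OF rV eq
          ba_coercive[OF rV]]) simp_all
  then show ?thesis by (simp add: r_def)
qed

definition small_perturbations :: "((real^2) \<Rightarrow> real) set" where
  "small_perturbations = {\<eta> \<in> C1_bdry \<Omega>. C1_norm \<Omega> \<eta> < 1 / (2 * robin_const + 2)}"

lemma small_perturbation:
  assumes "\<eta> \<in> small_perturbations"
  shows "robin_perturbation \<Omega> T \<omega> f g q a a0 \<eta> (C1_norm \<Omega> \<eta>)"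
proof (rule robin_perturbationI)
  have \<eta>: "\<eta> \<in> C1_bdry \<Omega>" "C1_norm \<Omega> \<eta> < 1 / (2 * robin_const + 2)"
    using assms by (auto simp: small_perturbations_def)
  show "edgewise_continuous \<eta>" by (rule C1_bdry_edgewise_continuous[OF \<eta>(1)])
  show "\<And>x. x \<in> frontier \<Omega> \<Longrightarrow> \<bar>\<eta> x\<bar> \<le> C1_norm \<Omega> \<eta>" by (rule abs_le_C1_norm[OF \<eta>(1)])
  have "C1_norm \<Omega> \<eta> * robin_const \<le> 1 / (2 * robin_const + 2) * robin_const"
    using \<eta>(2) consts_nonneg(1) by (intro mult_right_mono) auto
  also have "\<dots> \<le> 1 / 2" using consts_nonneg(1) by (simp add: field_simps)
  finally show "C1_norm \<Omega> \<eta> * robin_const \<le> 1 / 2" .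
qed

lemma Za_eq: "Za T \<Omega> \<omega> f g q a \<eta> = zh T \<Omega> \<omega> f g q (\<lambda>x. a x + \<eta> x)"
  by (simp add: Za_def)

lemma Za_lipschitz:
  "\<exists>C>0. \<forall>\<eta>1\<in>small_perturbations. \<forall>\<eta>2\<in>small_perturbations.
     H1_norm \<Omega> (\<lambda>x. Za T \<Omega> \<omega> f g q a \<eta>1 x - Za T \<Omega> \<omega> f g q a \<eta>2 x)
       \<le> C * C1_norm \<Omega> (\<lambda>x. \<eta>1 x - \<eta>2 x)"
proof (intro exI[of _ "sqrt H1_const * lipschitz_const + 1"] conjI ballI)
  have "sqrt H1_const * lipschitz_const \<ge> 0"
    using consts_nonneg bounds_nonneg by (simp add: lipschitz_const_def)
  then show "sqrt H1_const * lipschitz_const + 1 > 0" by linarith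
  fix \<eta>1 \<eta>2 assume \<eta>: "\<eta>1 \<in> small_perturbations" "\<eta>2 \<in> small_perturbations"
  let ?\<delta> = "C1_norm \<Omega> (\<lambda>x. \<eta>1 x - \<eta>2 x)"
  have d: "(\<lambda>x. \<eta>1 x - \<eta>2 x) \<in> C1_bdry \<Omega>"
    using \<eta> C1_bdry_diff by (auto simp: small_perturbations_def)
  let ?e = "\<lambda>x. zh T \<Omega> \<omega> f g q (\<lambda>x. a x + \<eta>1 x) x - zh T \<Omega> \<omega> f g q (\<lambda>x. a x + \<eta>2 x) x"
  have "?e \<in> V"
    using robin_perturbation.zh_\<alpha>(1)[OF small_perturbation[OF \<eta>(1)]]
      robin_perturbation.zh_\<alpha>(1)[OF small_perturbation[OF \<eta>(2)]] by (rule fn_subspace_diff[OF fn_subspace_Vh])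
  then have "H1_norm \<Omega> ?e \<le> sqrt H1_const * energy_norm ?e" by (rule H1_norm_le)
  also have "\<dots> \<le> sqrt H1_const * (?\<delta> * lipschitz_const)"
    using zh_lipschitz[OF small_perturbation[OF \<eta>(1)] small_perturbation[OF \<eta>(2)]
        abs_le_C1_norm[OF d] C1_norm_nonneg[OF d]]
    by (intro mult_left_mono) (simp_all add: consts_nonneg)
  also have "\<dots> \<le> (sqrt H1_const * lipschitz_const + 1) * ?\<delta>"
    using C1_norm_nonneg[OF d] by (simp add: algebra_simps)
  finally show "H1_norm \<Omega> (\<lambda>x. Za T \<Omega> \<omega> f g q a \<eta>1 x - Za T \<Omega> \<omega> f g q a \<eta>2 x)
      \<le> (sqrt H1_const * lipschitz_const + 1) * ?\<delta>" by (simp add: Za_eq)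
qed

lemma zdot_bounded: "\<exists>K. \<forall>\<eta>\<in>C1_bdry \<Omega>. H1_norm \<Omega> (Zd \<eta>) \<le> K * C1_norm \<Omega> \<eta>"
proof (intro exI ballI)
  fix \<eta> assume \<eta>: "\<eta> \<in> C1_bdry \<Omega>"
  note ec = C1_bdry_edgewise_continuous[OF \<eta>]
  have "H1_norm \<Omega> (Zd \<eta>) \<le> sqrt H1_const * energy_norm (Zd \<eta>)" by (rule H1_norm_le[OF zdot(1)[OF ec]])
  also have "\<dots> \<le> sqrt H1_const * (C1_norm \<Omega> \<eta> * (mass_const * robin_const * u_bound + robin_const * z_bound))"
    by (intro mult_left_mono zdot_bound[OF ec abs_le_C1_norm[OF \<eta>] C1_norm_nonneg[OF \<eta>]]
          real_sqrt_ge_zero[OF consts_nonneg(3)])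
  finally show "H1_norm \<Omega> (Zd \<eta>)
      \<le> sqrt H1_const * (mass_const * robin_const * u_bound + robin_const * z_bound) * C1_norm \<Omega> \<eta>"
    by (simp add: mult_ac)
qed

lemma Za_frechet:
  "\<forall>\<epsilon>>0. \<exists>\<delta>>0. \<forall>\<eta>\<in>small_perturbations. C1_norm \<Omega> \<eta> < \<delta> \<longrightarrow>
     H1_norm \<Omega> (\<lambda>x. Za T \<Omega> \<omega> f g q a \<eta> x - Za T \<Omega> \<omega> f g q a (\<lambda>_. 0) x - Zd \<eta> x)
       \<le> \<epsilon> * C1_norm \<Omega> \<eta>"
proof (intro allI impI)
  fix \<epsilon> :: real assume \<epsilon>: "\<epsilon> > 0"
  define M where "M = sqrt H1_const * frechet_const + 1"
  have M0: "sqrt H1_const * frechet_const \<ge> 0"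
    using consts_nonneg bounds_nonneg by (simp add: frechet_const_def lipschitz_const_def)
  show "\<exists>\<delta>>0. \<forall>\<eta>\<in>small_perturbations. C1_norm \<Omega> \<eta> < \<delta> \<longrightarrow>
     H1_norm \<Omega> (\<lambda>x. Za T \<Omega> \<omega> f g q a \<eta> x - Za T \<Omega> \<omega> f g q a (\<lambda>_. 0) x - Zd \<eta> x)
       \<le> \<epsilon> * C1_norm \<Omega> \<eta>"
  proof (intro exI[of _ "\<epsilon> / M"] conjI ballI impI)
    show "\<epsilon> / M > 0" using \<epsilon> M0 by (simp add: M_def add_nonneg_pos)
    fix \<eta> assume \<eta>: "\<eta> \<in> small_perturbations" and small: "C1_norm \<Omega> \<eta> < \<epsilon> / M"
    let ?s = "C1_norm \<Omega> \<eta>" and ?r = "\<lambda>x. zh T \<Omega> \<omega> f g q (\<lambda>x. a x + \<eta> x) x - Z0 x - Zd \<eta> x"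
    interpret P: robin_perturbation \<Omega> T \<omega> f g q a a0 \<eta> ?s by (rule small_perturbation[OF \<eta>])
    have s0: "?s \<ge> 0" using C1_norm_nonneg \<eta> by (simp add: small_perturbations_def)
    have "?r \<in> V"
      by (rule fn_subspace_diff[OF fn_subspace_Vh fn_subspace_diff[OF fn_subspace_Vh P.zh_\<alpha>(1) Z0(1)]
            zdot(1)[OF P.edgewise_continuous_\<eta>]])
    then have "H1_norm \<Omega> ?r \<le> sqrt H1_const * energy_norm ?r" by (rule H1_norm_le)
    also have "\<dots> \<le> sqrt H1_const * (?s * ?s * frechet_const)"
      by (intro mult_left_mono zdot_remainder[OF small_perturbation[OF \<eta>] s0] real_sqrt_ge_zero[OF consts_nonneg(3)])
    also have "\<dots> \<le> ?s * (?s * M)" using s0 by (simp add: M_def algebra_simps mult_left_mono)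
    also have "\<dots> \<le> ?s * \<epsilon>"
      using small M0 s0 by (intro mult_left_mono) (simp_all add: M_def field_simps)
    finally show "H1_norm \<Omega> (\<lambda>x. Za T \<Omega> \<omega> f g q a \<eta> x - Za T \<Omega> \<omega> f g q a (\<lambda>_. 0) x - Zd \<eta> x)
        \<le> \<epsilon> * ?s" by (simp add: Za_eq mult.commute)
  qed
qed

lemma small_perturbations_ball: "\<exists>r>0. {\<eta> \<in> C1_bdry \<Omega>. C1_norm \<Omega> \<eta> < r} \<subseteq> small_perturbations"
  using consts_nonneg(1) by (intro exI[of _ "1 / (2 * robin_const + 2)"]) (auto simp: small_perturbations_def)

lemma sensitivity_unique:
  "\<forall>\<eta>\<in>C1_bdry \<Omega>. (\<exists>!w. udot_eq T \<Omega> f g a \<eta> w) \<and> (\<exists>!w. zdot_eq T \<Omega> \<omega> f g q a \<eta> w)"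
  using udot_eq_unique zdot_eq_unique C1_bdry_edgewise_continuous by blast

lemma zdot_linear:
  "\<forall>\<eta>1\<in>C1_bdry \<Omega>. \<forall>\<eta>2\<in>C1_bdry \<Omega>. \<forall>c.
     Zd (\<lambda>x. \<eta>1 x + \<eta>2 x) = (\<lambda>x. Zd \<eta>1 x + Zd \<eta>2 x) \<and> Zd (\<lambda>x. c * \<eta>1 x) = (\<lambda>x. c * Zd \<eta>1 x)"
  using zdot_add zdot_scale C1_bdry_edgewise_continuous by blast

end

theorem theorem3p6:
  fixes \<Omega> \<omega> :: "(real^2) set" and T :: "(real^2) set set"
    and f g q a :: "real^2 \<Rightarrow> real" and a0 :: real
  assumes "convex_polygonal_domain \<Omega>" and "fe_triangulation T \<Omega>"
    and "open \<omega>" and "\<omega> \<noteq> {}" and "\<omega> \<subseteq> \<Omega>"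
    and "L2_on \<Omega> f" and "H12_bdry \<Omega> g" and "L2_on \<omega> q"
    and "a0 > 0" and "a \<in> C1_bdry \<Omega>" and "\<forall>x\<in>frontier \<Omega>. a x \<ge> a0"
  shows "\<exists>D. D \<subseteq> C1_bdry \<Omega> \<and> (\<exists>r>0. {\<eta>\<in>C1_bdry \<Omega>. C1_norm \<Omega> \<eta> < r} \<subseteq> D)
     \<and> (\<forall>\<eta>\<in>D. disc_well_defined T \<Omega> \<omega> f g q (\<lambda>x. a x + \<eta> x))
     \<comment> \<open>(i) Lipschitz estimate\<close>
     \<and> (\<exists>\<rho>>0. \<exists>C>0. \<forall>\<eta>1\<in>D. \<forall>\<eta>2\<in>D. C1_norm \<Omega> \<eta>2 \<le> \<rho> \<longrightarrow>
          H1_norm \<Omega> (\<lambda>x. Za T \<Omega> \<omega> f g q a \<eta>1 x - Za T \<Omega> \<omega> f g q a \<eta>2 x)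
            \<le> C * C1_norm \<Omega> (\<lambda>x. \<eta>1 x - \<eta>2 x))
     \<comment> \<open>(ii) unique solvability of the sensitivity equations\<close>
     \<and> (\<forall>\<eta>\<in>C1_bdry \<Omega>. (\<exists>!w. udot_eq T \<Omega> f g a \<eta> w) \<and> (\<exists>!w. zdot_eq T \<Omega> \<omega> f g q a \<eta> w))
     \<comment> \<open>(ii) the map eta to zdot is bounded linear\<close>
     \<and> (\<forall>\<eta>1\<in>C1_bdry \<Omega>. \<forall>\<eta>2\<in>C1_bdry \<Omega>. \<forall>c::real.
          zdot T \<Omega> \<omega> f g q a (\<lambda>x. \<eta>1 x + \<eta>2 x)
            = (\<lambda>x. zdot T \<Omega> \<omega> f g q a \<eta>1 x + zdot T \<Omega> \<omega> f g q a \<eta>2 x)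
          \<and> zdot T \<Omega> \<omega> f g q a (\<lambda>x. c * \<eta>1 x) = (\<lambda>x. c * zdot T \<Omega> \<omega> f g q a \<eta>1 x))
     \<and> (\<exists>K. \<forall>\<eta>\<in>C1_bdry \<Omega>. H1_norm \<Omega> (zdot T \<Omega> \<omega> f g q a \<eta>) \<le> K * C1_norm \<Omega> \<eta>)
     \<comment> \<open>(ii) it is the Frechet derivative of Z_a at 0, as a map into H^1\<close>
     \<and> (\<forall>\<epsilon>>0. \<exists>\<delta>>0. \<forall>\<eta>\<in>D. C1_norm \<Omega> \<eta> < \<delta> \<longrightarrow>
          H1_norm \<Omega> (\<lambda>x. Za T \<Omega> \<omega> f g q a \<eta> x - Za T \<Omega> \<omega> f g q a (\<lambda>_. 0) x
                           - zdot T \<Omega> \<omega> f g q a \<eta> x)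
            \<le> \<epsilon> * C1_norm \<Omega> \<eta>)"
proof -
  interpret robin_problem \<Omega> T \<omega> f g q a a0
    by unfold_locales (use assms in auto)
  \<comment> \<open>on \<open>small_perturbations\<close> the Lipschitz bound holds without restricting \<open>\<eta>2\<close>\<close>
  have "\<exists>\<rho>>0. \<exists>C>0. \<forall>\<eta>1\<in>small_perturbations. \<forall>\<eta>2\<in>small_perturbations. C1_norm \<Omega> \<eta>2 \<le> \<rho> \<longrightarrow>
      H1_norm \<Omega> (\<lambda>x. Za T \<Omega> \<omega> f g q a \<eta>1 x - Za T \<Omega> \<omega> f g q a \<eta>2 x)
        \<le> C * C1_norm \<Omega> (\<lambda>x. \<eta>1 x - \<eta>2 x)"
    using Za_lipschitz by (intro exI[of _ 1]) auto
  moreover have "small_perturbations \<subseteq> C1_bdry \<Omega>" by (auto simp: small_perturbations_def)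
  moreover have "\<forall>\<eta>\<in>small_perturbations. disc_well_defined T \<Omega> \<omega> f g q (\<lambda>x. a x + \<eta> x)"
    using robin_perturbation.disc_well_defined_\<alpha>[OF small_perturbation] by blast
  ultimately show ?thesis
    using small_perturbations_ball sensitivity_unique zdot_linear zdot_bounded Za_frechet
    by (intro exI[of _ small_perturbations] conjI) assumption+
qed

end
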